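(* Let $(V,M)$ be a valuation domain with quotient field $L$, $M\neq0$, of the form $V=K+M$ with $K$ a subfield of $V$. Let $D$ be a subring of $K$ with quotient field $F$, let $\widetilde{D}$ be the integral closure of $D$ in $K$, let $R=D+M$ and let $\overline{R}$ be the integral closure of $R$ in $L$. Then: (6) $R$ is a DVR $\iff$ $D=K$ and $V$ is a DVR $\iff$ $R=V$ is a DVR; and likewise $R$ is a rational valuation domain $\iff$ $D=K$ and $V$ is a rational valuation domain $\iff$ $R=V$ is a rational valuation domain. (7) $R\subseteq\overline{R}$ is a root extension (resp. bounded root extension) $\iff$ $D\subseteq\widetilde{D}$ is a root extension (resp. bounded root extension). (8) $R$ is an AV-domain $\iff$ $\widetilde{D}$ is a valuation domain with quotient field $K$ and $D\subseteq\widetilde{D}$ is a root extension $\iff$ $D$ is an AV-domain and $F\subseteq K$ is a root extension (i.e. $K/F$ is purely inseparable or $K$ is algebraic over a finite field). (9) The following are equivalent: $R$ is an AV-domain with $\overline{R}$ a DVR; $R$ is an AV-domain whose maximal ideal $Q$ satisfies $\bigcap_{n\ge1}Q^n=0$; $R$ is an AV-domain and for each ideal $A$ with $0\subsetneq A\subsetneq R$ there is $n$ with $Q^n\subseteq A$, $Q$ the maximal ideal of $R$; $V$ is a DVR, $D=F$ is a field and $F\subseteq K$ is a root extension.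
   Context: A root extension $R\subseteq S$: each $s\in S$ has some power $s^n\in R$; bounded if one $n$ works for all $s$. AV-domain: domain where for nonzero $a,b$ some $n$ gives $a^n\mid b^n$ or $b^n\mid a^n$. DVR: local PID not a field. Rational valuation domain: valuation domain whose value group is order-isomorphic to a subgroup of $(\mathbb{Q},+)$. *)

theory Defs
  imports "HOL-Computational_Algebra.Polynomial"
begin

text \<open>All rings are subrings of a fixed field (the type 'a), which plays the role of L.\<close>

definition subring :: "'a::field set \<Rightarrow> bool" where
  "subring S \<longleftrightarrow> 0 \<in> S \<and> 1 \<in> S \<and> (\<forall>x\<in>S. \<forall>y\<in>S. x + y \<in> S \<and> x * y \<in> S) \<and> (\<forall>x\<in>S. - x \<in> S)"

definition subfield :: "'a::field set \<Rightarrow> bool" where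
  "subfield S \<longleftrightarrow> subring S \<and> (\<forall>x\<in>S. x \<noteq> 0 \<longrightarrow> inverse x \<in> S)"

definition frac_field :: "'a::field set \<Rightarrow> 'a set" where
  "frac_field S = {a / b | a b. a \<in> S \<and> b \<in> S \<and> b \<noteq> 0}"

definition ideal :: "'a::field set \<Rightarrow> 'a set \<Rightarrow> bool" where
  "ideal I S \<longleftrightarrow> I \<subseteq> S \<and> 0 \<in> I \<and> (\<forall>x\<in>I. \<forall>y\<in>I. x + y \<in> I) \<and> (\<forall>x\<in>I. \<forall>s\<in>S. s * x \<in> I)"

definition maximal_ideal :: "'a::field set \<Rightarrow> 'a set \<Rightarrow> bool" where
  "maximal_ideal I S \<longleftrightarrow> ideal I S \<and> I \<noteq> S \<and>
     (\<forall>J. ideal J S \<and> I \<subseteq> J \<longrightarrow> J = I \<or> J = S)"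

definition valuation_domain :: "'a::field set \<Rightarrow> bool" where
  "valuation_domain S \<longleftrightarrow> subring S \<and>
     (\<forall>a\<in>S. \<forall>b\<in>S. (\<exists>c\<in>S. b = a * c) \<or> (\<exists>c\<in>S. a = b * c))"

definition DVR :: "'a::field set \<Rightarrow> bool" where
  "DVR S \<longleftrightarrow> subring S \<and> (\<exists>!I. maximal_ideal I S) \<and>
     (\<forall>I. ideal I S \<longrightarrow> (\<exists>a\<in>S. I = (\<lambda>s. a * s) ` S)) \<and> \<not> subfield S"

text \<open>Rational valuation domain: valuation domain whose value group
  (F^*/U(S), ordered by xU \<le> yU iff y/x \<in> S, F the quotient field) is isomorphic as an
  ordered group to a subgroup of (\<rat>,+).  Such an isomorphism is the same as a group
  homomorphism v : F^* \<rightarrow> \<rat> with v x \<ge> 0 iff x \<in> S (its kernel is then U(S)).\<close>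
definition rational_valuation_domain :: "'a::field set \<Rightarrow> bool" where
  "rational_valuation_domain S \<longleftrightarrow> valuation_domain S \<and>
     (\<exists>v :: 'a \<Rightarrow> rat.
        (\<forall>x\<in>frac_field S - {0}. \<forall>y\<in>frac_field S - {0}. v (x * y) = v x + v y) \<and>
        (\<forall>x\<in>frac_field S - {0}. 0 \<le> v x \<longleftrightarrow> x \<in> S))"

definition AV_domain :: "'a::field set \<Rightarrow> bool" where
  "AV_domain S \<longleftrightarrow> subring S \<and>
     (\<forall>a\<in>S. \<forall>b\<in>S. a \<noteq> 0 \<and> b \<noteq> 0 \<longrightarrow>
        (\<exists>n\<ge>1. (\<exists>c\<in>S. b ^ n = a ^ n * c) \<or> (\<exists>c\<in>S. a ^ n = b ^ n * c)))"

definition root_ext :: "'a::field set \<Rightarrow> 'a set \<Rightarrow> bool" where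
  "root_ext R S \<longleftrightarrow> R \<subseteq> S \<and> (\<forall>s\<in>S. \<exists>n\<ge>1. s ^ n \<in> R)"

definition bounded_root_ext :: "'a::field set \<Rightarrow> 'a set \<Rightarrow> bool" where
  "bounded_root_ext R S \<longleftrightarrow> R \<subseteq> S \<and> (\<exists>n\<ge>1. \<forall>s\<in>S. s ^ n \<in> R)"

definition integral_closure :: "'a::field set \<Rightarrow> 'a set \<Rightarrow> 'a set" where
  "integral_closure S T = {x \<in> T. \<exists>p. lead_coeff p = 1 \<and> (\<forall>i. coeff p i \<in> S) \<and> poly p x = 0}"

definition ideal_prod :: "'a::field set \<Rightarrow> 'a set \<Rightarrow> 'a set" where
  "ideal_prod I J = {(\<Sum>i<k. a i * b i) | (k::nat) (a::nat \<Rightarrow> 'a) b. \<forall>i<k. a i \<in> I \<and> b i \<in> J}"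

primrec ideal_pow :: "'a::field set \<Rightarrow> 'a set \<Rightarrow> nat \<Rightarrow> 'a set" where
  "ideal_pow S Q 0 = S"
| "ideal_pow S Q (Suc n) = ideal_prod Q (ideal_pow S Q n)"

end

theory Submission
  imports Defs "Jordan_Normal_Form.Char_Poly"
begin

(* Since V = K + M with K and M meeting in 0, the projection proj : V -> K along M is a ring
   homomorphism with kernel M, and R = proj^-1(D).  Monic equations over R project to monic
   equations over D and V is integrally closed, so proj maps the integral closure of R onto
   that of D; this gives (7).  For (6): R = V iff D = K, and an element k of K - D would make
   the valuation ring R contain 1/k and all m k^n (m in M), which no rank one valuation allows.

   For (8) the right notion is an almost valuation ring D of K: every nonzero element of K has
   a power of itself or of its inverse in D.  As V is a valuation ring with V/M = K, R is an
   AV-domain iff D is an almost valuation ring of K; then the integral closure of D in K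
   consists of the roots of elements of D and is a valuation ring of K.

   For (9), a nonunit d of D lies in the maximal ideal Q of R; it gives M = d (M/d), a subset
   of every Q^n, and the nonzero elements d^n of K in Q^n, which are not in M.  So each
   condition forces D to be a field; then R is local with maximal ideal M, and all conditions
   say that V is a DVR: if the powers of M meet in 0, any t in M - M^2 generates M and every
   nonzero element of V is a unit times a power of t. *)

section \<open>Subrings, ideals and valuation domains\<close>

lemma subring_zero: "subring S \<Longrightarrow> 0 \<in> S" by (simp add: subring_def)
lemma subring_one: "subring S \<Longrightarrow> 1 \<in> S" by (simp add: subring_def)
lemma subring_add: "subring S \<Longrightarrow> x \<in> S \<Longrightarrow> y \<in> S \<Longrightarrow> x + y \<in> S" by (simp add: subring_def)
lemma subring_mult: "subring S \<Longrightarrow> x \<in> S \<Longrightarrow> y \<in> S \<Longrightarrow> x * y \<in> S" by (simp add: subring_def)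
lemma subring_uminus: "subring S \<Longrightarrow> x \<in> S \<Longrightarrow> - x \<in> S" by (simp add: subring_def)

lemma subring_diff: "subring S \<Longrightarrow> x \<in> S \<Longrightarrow> y \<in> S \<Longrightarrow> x - y \<in> S"
  using subring_add[of S x "- y"] subring_uminus[of S y] by simp

lemma subring_power: "subring S \<Longrightarrow> x \<in> S \<Longrightarrow> x ^ n \<in> S"
  by (induct n) (auto intro: subring_one subring_mult)

lemma subring_sum: "subring S \<Longrightarrow> (\<And>i. i \<in> A \<Longrightarrow> f i \<in> S) \<Longrightarrow> sum f A \<in> S"
  by (induct A rule: infinite_finite_induct) (auto intro: subring_zero subring_add)

lemma subring_inverse_power:
  assumes S: "subring S" and x: "x \<in> S" and n: "n \<ge> 1" and xn: "inverse x ^ n \<in> S"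
  shows "inverse x \<in> S"
proof -
  have "inverse x = x ^ (n - 1) * inverse x ^ n"
    using n by (cases "x = 0") (simp_all add: power_inverse[symmetric] field_simps power_Suc[symmetric])
  also have "\<dots> \<in> S" by (rule subring_mult[OF S subring_power[OF S x] xn])
  finally show ?thesis .
qed

lemma subfield_subring: "subfield S \<Longrightarrow> subring S"
  by (simp add: subfield_def)

lemma subfield_inverse: "subfield S \<Longrightarrow> x \<in> S \<Longrightarrow> inverse x \<in> S"
  by (cases "x = 0") (auto simp: subfield_def subring_def)

lemma subfield_divide: "subfield S \<Longrightarrow> x \<in> S \<Longrightarrow> y \<in> S \<Longrightarrow> x / y \<in> S"
  by (simp add: divide_inverse subfield_inverse subfield_subring subring_mult)

lemma frac_fieldI: "a \<in> S \<Longrightarrow> b \<in> S \<Longrightarrow> b \<noteq> 0 \<Longrightarrow> a / b \<in> frac_field S"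
  unfolding frac_field_def by blast

lemma frac_field_subset: "subfield K \<Longrightarrow> D \<subseteq> K \<Longrightarrow> frac_field D \<subseteq> K"
  unfolding frac_field_def using subfield_divide by blast

lemma subring_subset_frac_field: "subring S \<Longrightarrow> S \<subseteq> frac_field S"
  using frac_fieldI[of _ S 1] by (fastforce intro: subring_one)

lemma frac_field_of_subfield: "subfield S \<Longrightarrow> frac_field S = S"
  using frac_field_subset[of S S] subring_subset_frac_field[of S] by (auto simp: subfield_subring)

lemma frac_field_inverse_cases:
  assumes "subring S" and "x \<in> S \<or> inverse x \<in> S"
  shows "x \<in> frac_field S"
  using assms frac_fieldI[of x S 1] frac_fieldI[of 1 S "inverse x"]
  by (cases "x = 0") (auto simp: subring_one divide_inverse)

lemma subfield_UNIV: "subfield (UNIV :: 'a::field set)"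
  by (simp add: subfield_def subring_def)

lemma ideal_subset: "ideal I S \<Longrightarrow> I \<subseteq> S" unfolding ideal_def by blast
lemma ideal_zero: "ideal I S \<Longrightarrow> 0 \<in> I" unfolding ideal_def by blast
lemma ideal_add: "ideal I S \<Longrightarrow> x \<in> I \<Longrightarrow> y \<in> I \<Longrightarrow> x + y \<in> I" unfolding ideal_def by blast
lemma ideal_mult: "ideal I S \<Longrightarrow> s \<in> S \<Longrightarrow> x \<in> I \<Longrightarrow> s * x \<in> I" unfolding ideal_def by blast

lemma ideal_diff:
  assumes S: "subring S" and I: "ideal I S" and x: "x \<in> I" and y: "y \<in> I"
  shows "x - y \<in> I"
  using ideal_add[OF I x ideal_mult[OF I subring_uminus[OF S subring_one[OF S]] y]] by simp

lemma ideal_sum: "ideal I S \<Longrightarrow> (\<And>i. i \<in> A \<Longrightarrow> f i \<in> I) \<Longrightarrow> sum f A \<in> I"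
  by (induct A rule: infinite_finite_induct) (auto simp: ideal_def)

lemma ideal_eq_if_unit:
  assumes J: "ideal J S" and x: "x \<in> J" "x \<noteq> 0" "inverse x \<in> S"
  shows "J = S"
proof -
  have "1 \<in> J" using ideal_mult[OF J x(3) x(1)] x(2) by simp
  then have "s \<in> J" if "s \<in> S" for s using ideal_mult[OF J that] by (metis mult_1_right)
  then have "S \<subseteq> J" by blast
  then show ?thesis using ideal_subset[OF J] by blast
qed

lemma ideal_Inter:
  assumes I: "\<And>n. n \<in> A \<Longrightarrow> ideal (I n) S" and A: "A \<noteq> {}"
  shows "ideal (\<Inter>n\<in>A. I n) S"
  unfolding ideal_def
proof (intro conjI ballI)
  show "(\<Inter>n\<in>A. I n) \<subseteq> S" using A ideal_subset[OF I] by blast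
qed (auto intro: ideal_zero[OF I] ideal_add[OF I] ideal_mult[OF I])

lemma ideal_principal:
  assumes S: "subring S" and c: "c \<in> S"
  shows "ideal ((*) c ` S) S"
  unfolding ideal_def
proof (intro conjI ballI)
  show "(*) c ` S \<subseteq> S" using S c subring_mult by blast
  show "0 \<in> (*) c ` S" using S subring_zero by force
  fix x y s assume x: "x \<in> (*) c ` S"
  then obtain u where u: "u \<in> S" "x = c * u" by blast
  { assume "y \<in> (*) c ` S"
    then obtain w where "w \<in> S" "y = c * w" by blast
    then show "x + y \<in> (*) c ` S"
      using u subring_add[OF S] by (auto simp: distrib_left[symmetric]) }
  { assume "s \<in> S"
    then show "s * x \<in> (*) c ` S"
      using u subring_mult[OF S] by (auto simp: mult.left_commute) }
qed

lemma ideal_prod_mem: "a \<in> I \<Longrightarrow> b \<in> J \<Longrightarrow> a * b \<in> ideal_prod I J"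
  unfolding ideal_prod_def
  by (rule CollectI, rule exI[of _ "1::nat"], rule exI[of _ "\<lambda>_. a"], rule exI[of _ "\<lambda>_. b"]) simp

lemma ideal_prod_subset:
  assumes T: "ideal T S" and prod: "\<And>x y. x \<in> I \<Longrightarrow> y \<in> J \<Longrightarrow> x * y \<in> T"
  shows "ideal_prod I J \<subseteq> T"
proof
  fix z assume "z \<in> ideal_prod I J"
  then obtain k :: nat and a b where z: "z = (\<Sum>i<k. a i * b i)" "\<forall>i<k. a i \<in> I \<and> b i \<in> J"
    unfolding ideal_prod_def by blast
  show "z \<in> T" unfolding z(1) using z(2) prod by (intro ideal_sum[OF T]) auto
qed

lemma ideal_prod_right_unit:
  assumes S: "subring S" and Q: "ideal Q S"
  shows "ideal_prod Q S = Q"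
proof
  show "ideal_prod Q S \<subseteq> Q"
    using ideal_mult[OF Q] by (intro ideal_prod_subset[OF Q]) (metis mult.commute)
  show "Q \<subseteq> ideal_prod Q S"
    using ideal_prod_mem[of _ Q 1 S] subring_one[OF S] by fastforce
qed

lemma ideal_pow_change_base:
  assumes "ideal_prod Q S = ideal_prod Q T" and "n \<ge> 1"
  shows "ideal_pow S Q n = ideal_pow T Q n"
  using assms(2)
proof (induct n)
  case (Suc n)
  then show ?case using assms(1) by (cases "n = 0") simp_all
qed simp

lemma ideal_pow_power_mem: "subring S \<Longrightarrow> x \<in> Q \<Longrightarrow> x ^ n \<in> ideal_pow S Q n"
  by (induct n) (simp_all add: subring_one ideal_prod_mem)

lemma maximal_ideal_iff_nonunits:
  assumes S: "subring S" and N: "ideal N S" "1 \<notin> N"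
    and units: "\<And>x. x \<in> S \<Longrightarrow> x \<notin> N \<Longrightarrow> x \<noteq> 0 \<and> inverse x \<in> S"
  shows "maximal_ideal I S \<longleftrightarrow> I = N"
proof -
  have proper_le_N: "J \<subseteq> N" if J: "ideal J S" "J \<noteq> S" for J
    using units ideal_eq_if_unit[OF J(1)] ideal_subset[OF J(1)] J(2) by blast
  have "N \<noteq> S" using N(2) subring_one[OF S] by blast
  then have maximal_N: "maximal_ideal N S"
    unfolding maximal_ideal_def using N(1) proper_le_N by blast
  show ?thesis
  proof
    assume I: "maximal_ideal I S"
    then have "I \<subseteq> N" using proper_le_N by (simp add: maximal_ideal_def)
    then show "I = N" using I \<open>N \<noteq> S\<close> N(1) by (auto simp: maximal_ideal_def)
  qed (use maximal_N in simp)
qed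

lemma valuation_domain_subring: "valuation_domain S \<Longrightarrow> subring S"
  by (simp add: valuation_domain_def)

lemma valuation_domain_dvd_cases:
  "valuation_domain S \<Longrightarrow> a \<in> S \<Longrightarrow> b \<in> S \<Longrightarrow> (\<exists>c\<in>S. b = a * c) \<or> (\<exists>c\<in>S. a = b * c)"
  by (simp add: valuation_domain_def)

lemma valuation_domain_inverse_cases:
  assumes S: "valuation_domain S" and x: "x \<in> frac_field S"
  shows "x \<in> S \<or> inverse x \<in> S"
proof -
  obtain a b where ab: "x = a / b" "a \<in> S" "b \<in> S" "b \<noteq> 0"
    using x by (auto simp: frac_field_def)
  from valuation_domain_dvd_cases[OF S ab(2,3)]
  consider c where "c \<in> S" "b = a * c" | c where "c \<in> S" "a = b * c" by blast
  then show ?thesis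
  proof cases
    case 1
    then have "inverse x = c" using ab by (simp add: divide_inverse)
    then show ?thesis using 1 by simp
  next
    case 2
    then have "x = c" using ab by simp
    then show ?thesis using 2 by simp
  qed
qed

lemma valuation_domain_nonunits_ideal:
  assumes S: "valuation_domain S"
  shows "ideal {x\<in>S. x = 0 \<or> inverse x \<notin> S} S" (is "ideal ?N S")
proof -
  have S_subring: "subring S" using S by (rule valuation_domain_subring)
  have nonunit_mult: "s * a \<in> ?N" if a: "a \<in> ?N" and s: "s \<in> S" for a s
  proof -
    have "s * a = 0 \<or> inverse (s * a) \<notin> S"
    proof (rule ccontr)
      assume "\<not> ?thesis"
      then have sa: "s * a \<noteq> 0" "inverse (s * a) \<in> S" by auto
      have "inverse a = s * inverse (s * a)" using sa(1) by (simp add: field_simps)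
      also have "\<dots> \<in> S" using S_subring s sa(2) by (rule subring_mult)
      finally show False using a sa(1) by auto
    qed
    then show ?thesis using S_subring a s by (simp add: subring_mult)
  qed
  have nonunit_add: "a + a * c \<in> ?N" if "a \<in> ?N" "c \<in> S" for a c
  proof -
    have "(1 + c) * a \<in> ?N" using nonunit_mult that S_subring by (simp add: subring_add subring_one)
    then show ?thesis by (simp add: algebra_simps)
  qed
  show ?thesis
    unfolding ideal_def
  proof (intro conjI ballI)
    show "?N \<subseteq> S" "0 \<in> ?N" using subring_zero[OF S_subring] by auto
  next
    fix a b assume a: "a \<in> ?N" and b: "b \<in> ?N"
    from valuation_domain_dvd_cases[OF S, of a b] a b
    consider c where "c \<in> S" "b = a * c" | c where "c \<in> S" "a = b * c" by blast
    then show "a + b \<in> ?N"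
    proof cases
      case 1 then show ?thesis using nonunit_add[OF a] by simp
    next
      case 2 then show ?thesis using nonunit_add[OF b] by (simp add: add.commute)
    qed
  next
    fix a s assume "a \<in> ?N" "s \<in> S"
    then show "s * a \<in> ?N" by (rule nonunit_mult)
  qed
qed

lemma valuation_domain_unit_if_not_maximal:
  assumes S: "valuation_domain S" and M: "maximal_ideal M S" and x: "x \<in> S" "x \<notin> M"
  shows "x \<noteq> 0 \<and> inverse x \<in> S"
proof -
  let ?N = "{x\<in>S. x = 0 \<or> inverse x \<notin> S}"
  have M_ideal: "ideal M S" "M \<noteq> S"
    and M_max: "\<And>J. ideal J S \<Longrightarrow> M \<subseteq> J \<Longrightarrow> J = M \<or> J = S"
    using M by (auto simp: maximal_ideal_def)
  have "M \<subseteq> ?N" using ideal_eq_if_unit[OF M_ideal(1)] M_ideal(2) ideal_subset[OF M_ideal(1)] by blast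
  then have "?N = M \<or> ?N = S" by (rule M_max[OF valuation_domain_nonunits_ideal[OF S]])
  moreover have "1 \<notin> ?N" "1 \<in> S" using subring_one[OF valuation_domain_subring[OF S]] by auto
  ultimately show ?thesis using x by blast
qed

lemma rational_valuation_domain_archimedean:
  assumes S: "rational_valuation_domain S" and L: "frac_field S = UNIV"
    and w: "w \<in> S" "inverse w \<notin> S" and x: "x \<noteq> 0"
  shows "\<exists>n. x * inverse w ^ n \<notin> S"
proof -
  obtain v :: "'a \<Rightarrow> rat" where
    "\<forall>a\<in>UNIV - {0}. \<forall>b\<in>UNIV - {0}. v (a * b) = v a + v b" and
    "\<forall>a\<in>UNIV - {0}. 0 \<le> v a \<longleftrightarrow> a \<in> S"
    using S L unfolding rational_valuation_domain_def by auto
  then have v_mult: "\<And>a b. a \<noteq> 0 \<Longrightarrow> b \<noteq> 0 \<Longrightarrow> v (a * b) = v a + v b"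
    and v_nonneg: "\<And>a. a \<noteq> 0 \<Longrightarrow> 0 \<le> v a \<longleftrightarrow> a \<in> S" by blast+
  have "valuation_domain S" using S by (simp add: rational_valuation_domain_def)
  then have "0 \<in> S" by (simp add: valuation_domain_subring subring_zero)
  then have w0: "w \<noteq> 0" using w(2) by auto
  have "v w + v (inverse w) = v 1" using v_mult[of w "inverse w"] w0 by simp
  moreover have "v 1 = 0" using v_mult[of 1 1] by simp
  moreover have "v (inverse w) < 0" using v_nonneg[of "inverse w"] w w0 by simp
  ultimately have vw: "v (inverse w) = - v w" "v w > 0" by linarith+
  have v_power: "v (x * inverse w ^ n) = v x - of_nat n * v w" for n
  proof (induct n)
    case (Suc n)
    have "x * inverse w ^ Suc n = (x * inverse w ^ n) * inverse w" by (simp add: mult_ac)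
    then show ?case using Suc x w0 v_mult vw(1) by (simp add: algebra_simps)
  qed simp
  obtain n where "v x < of_nat n * v w" using ex_less_of_nat_mult[OF vw(2)] by blast
  then have "\<not> 0 \<le> v (x * inverse w ^ n)" by (simp add: v_power)
  moreover have "x * inverse w ^ n \<noteq> 0" using x w0 by simp
  ultimately show ?thesis using v_nonneg by blast
qed

lemma DVR_principal: "DVR S \<Longrightarrow> ideal I S \<Longrightarrow> \<exists>a\<in>S. I = (*) a ` S"
  by (simp add: DVR_def)

section \<open>Integral elements\<close>

definition poly_over :: "'a::field set \<Rightarrow> 'a poly set" where
  "poly_over S = {p. \<forall>i. coeff p i \<in> S}"

lemma poly_over_add: "subring S \<Longrightarrow> p \<in> poly_over S \<Longrightarrow> q \<in> poly_over S \<Longrightarrow> p + q \<in> poly_over S"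
  by (auto simp: poly_over_def intro: subring_add)

lemma poly_over_uminus: "subring S \<Longrightarrow> p \<in> poly_over S \<Longrightarrow> - p \<in> poly_over S"
  by (auto simp: poly_over_def intro: subring_uminus)

lemma poly_over_mult: "subring S \<Longrightarrow> p \<in> poly_over S \<Longrightarrow> q \<in> poly_over S \<Longrightarrow> p * q \<in> poly_over S"
  by (auto simp: poly_over_def coeff_mult intro!: subring_sum subring_mult)

lemma poly_over_pCons: "subring S \<Longrightarrow> c \<in> S \<Longrightarrow> p \<in> poly_over S \<Longrightarrow> pCons c p \<in> poly_over S"
  by (auto simp: poly_over_def coeff_pCons split: nat.splits)

lemma poly_over_zero: "subring S \<Longrightarrow> 0 \<in> poly_over S"
  by (auto simp: poly_over_def intro: subring_zero)

lemma poly_over_one: "subring S \<Longrightarrow> 1 \<in> poly_over S"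
  by (auto simp: poly_over_def coeff_1 intro: subring_zero subring_one)

lemma poly_over_sum: "subring S \<Longrightarrow> (\<And>i. i \<in> A \<Longrightarrow> f i \<in> poly_over S) \<Longrightarrow> sum f A \<in> poly_over S"
  by (induct A rule: infinite_finite_induct) (auto intro: poly_over_zero poly_over_add)

lemma poly_over_prod: "subring S \<Longrightarrow> (\<And>i. i \<in> A \<Longrightarrow> f i \<in> poly_over S) \<Longrightarrow> prod f A \<in> poly_over S"
  by (induct A rule: infinite_finite_induct) (auto intro: poly_over_one poly_over_mult)

lemma poly_over_signof: "subring S \<Longrightarrow> signof p \<in> poly_over S"
  by (cases p rule: sign_cases) (auto intro: poly_over_one poly_over_uminus)

definition integral_over :: "'a::field set \<Rightarrow> 'a \<Rightarrow> bool" where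
  "integral_over S x \<longleftrightarrow> (\<exists>p\<in>poly_over S. lead_coeff p = 1 \<and> poly p x = 0)"

lemma integral_closure_eq: "integral_closure S T = {x \<in> T. integral_over S x}"
  by (auto simp: integral_closure_def integral_over_def poly_over_def)

lemma integral_over_mono: "integral_over S x \<Longrightarrow> S \<subseteq> T \<Longrightarrow> integral_over T x"
  unfolding integral_over_def poly_over_def by blast

lemma monic_root_degree_pos:
  fixes p :: "'a::field poly"
  assumes "lead_coeff p = 1" and "poly p x = 0"
  shows "degree p \<ge> 1"
  using assms by (cases "degree p") (auto elim: degree_eq_zeroE)

lemma poly_monic_expand:
  fixes p :: "'a::field poly"
  assumes "lead_coeff p = 1"
  shows "poly p x = (\<Sum>j<degree p. coeff p j * x ^ j) + x ^ degree p"
  using assms by (simp add: poly_altdef lessThan_Suc_atMost[symmetric])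

definition mat_over :: "'a::field set \<Rightarrow> nat \<Rightarrow> 'a mat set" where
  "mat_over S n = {A \<in> carrier_mat n n. \<forall>i<n. \<forall>j<n. A $$ (i, j) \<in> S}"

lemma mat_over_power:
  assumes S: "subring S" and A: "A \<in> mat_over S n"
  shows "A ^\<^sub>m m \<in> mat_over S n"
proof (induct m)
  case 0
  show ?case using S A by (auto simp: mat_over_def subring_zero subring_one)
next
  case (Suc m)
  have "(A ^\<^sub>m Suc m) $$ (i, j) \<in> S" if "i < n" "j < n" for i j
  proof -
    have "(A ^\<^sub>m Suc m) $$ (i, j) = (\<Sum>l<n. (A ^\<^sub>m m) $$ (i, l) * A $$ (l, j))"
      using that A Suc by (auto simp: mat_over_def scalar_prod_def atLeast0LessThan)
    also have "\<dots> \<in> S"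
      using that A Suc by (auto simp: mat_over_def intro!: subring_sum[OF S] subring_mult[OF S])
    finally show ?thesis .
  qed
  moreover have "A ^\<^sub>m Suc m \<in> carrier_mat n n"
    using A by (intro pow_carrier_mat) (simp add: mat_over_def)
  ultimately show ?case unfolding mat_over_def by blast
qed

lemma mat_over_one_plus:
  assumes S: "subring S" and A: "A \<in> mat_over S n"
  shows "1\<^sub>m n + A \<in> mat_over S n"
  using A by (auto simp: mat_over_def intro!: subring_add[OF S] subring_one[OF S])

lemma char_poly_poly_over:
  assumes S: "subring S" and A: "A \<in> mat_over S n"
  shows "char_poly A \<in> poly_over S"
proof -
  have A_carrier: "A \<in> carrier_mat n n" using A by (simp add: mat_over_def)
  then have cm: "char_poly_matrix A \<in> carrier_mat n n" by simp
  have entries: "char_poly_matrix A $$ (i, j) \<in> poly_over S" if "i < n" "j < n" for i j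
    using that A S
    by (auto simp: char_poly_matrix_def mat_over_def
        intro!: poly_over_add poly_over_pCons poly_over_zero poly_over_one subring_uminus)
  show ?thesis
    unfolding char_poly_def det_def'[OF cm]
    using entries
    by (intro poly_over_sum[OF S] poly_over_mult[OF S poly_over_signof[OF S]] poly_over_prod[OF S])
       (auto simp: permutes_def)
qed

lemma eigenvalue_integral_over:
  assumes S: "subring S" and A: "A \<in> mat_over S n" and x: "eigenvalue A x"
  shows "integral_over S x"
proof -
  have A_carrier: "A \<in> carrier_mat n n" using A by (simp add: mat_over_def)
  show ?thesis
    unfolding integral_over_def
    using char_poly_poly_over[OF S A] degree_monic_char_poly[OF A_carrier]
      eigenvalue_root_char_poly[OF A_carrier] x
    by auto
qed

text \<open>The companion matrix of a monic equation of \<open>x\<close> has eigenvector \<open>(1, x, \<dots>, x\<^sup>k\<^sup>-\<^sup>1)\<close>.\<close>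

lemma integral_over_eigenvector:
  assumes S: "subring S" and x: "integral_over S x"
  obtains k A v where "A \<in> mat_over S k" "eigenvector A v x"
proof -
  obtain p where p: "p \<in> poly_over S" "lead_coeff p = 1" "poly p x = 0"
    using x unfolding integral_over_def by blast
  define k where "k = degree p"
  have k1: "k \<ge> 1" using monic_root_degree_pos[OF p(2,3)] by (simp add: k_def)
  have p_sum: "(\<Sum>j<k. coeff p j * x ^ j) = - (x ^ k)"
    using poly_monic_expand[OF p(2), of x] p(3) by (simp add: k_def eq_neg_iff_add_eq_0)
  define C where "C = mat k k (\<lambda>(i, j). if i + 1 < k then (if j = i + 1 then 1 else 0) else - coeff p j)"
  define v where "v = vec k (\<lambda>i. x ^ i)"
  have C: "C \<in> mat_over S k"
    using S p(1) by (auto simp: C_def mat_over_def poly_over_def subring_zero subring_one subring_uminus)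
  have "(C *\<^sub>v v) $ i = x * v $ i" if i: "i < k" for i
  proof -
    have "(C *\<^sub>v v) $ i = (\<Sum>j<k. C $$ (i, j) * x ^ j)"
      using i by (simp add: C_def v_def scalar_prod_def row_def atLeast0LessThan)
    also have "\<dots> = x ^ (i + 1)"
    proof (cases "i + 1 < k")
      case True
      then show ?thesis by (simp add: C_def if_distrib[of "\<lambda>c. c * _"] sum.delta cong: if_cong)
    next
      case False
      have "k = i + 1" using False i by simp
      have "(\<Sum>j<k. C $$ (i, j) * x ^ j) = - (\<Sum>j<k. coeff p j * x ^ j)"
        using i False by (simp add: C_def sum_negf)
      also have "\<dots> = x ^ k" using p_sum by simp
      also have "\<dots> = x ^ (i + 1)" using \<open>k = i + 1\<close> by simp
      finally show ?thesis .
    qed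
    finally show ?thesis using i by (simp add: v_def)
  qed
  then have "C *\<^sub>v v = x \<cdot>\<^sub>v v" by (intro eq_vecI) (simp_all add: C_def v_def)
  moreover have "v $ 0 \<noteq> 0\<^sub>v k $ 0" using k1 by (simp add: v_def)
  then have "v \<noteq> 0\<^sub>v k" by metis
  ultimately have "eigenvector C v x" by (simp add: eigenvector_def C_def v_def)
  with C show ?thesis by (rule that)
qed

lemma integral_over_power:
  assumes S: "subring S" and x: "integral_over S x"
  shows "integral_over S (x ^ m)"
proof -
  obtain k A v where A: "A \<in> mat_over S k" and v: "eigenvector A v x"
    using integral_over_eigenvector[OF S x] .
  have A_carrier: "A \<in> carrier_mat k k" using A by (simp add: mat_over_def)
  have "eigenvector (A ^\<^sub>m m) v (x ^ m)"
    using v eigenvector_pow[OF A_carrier v] A_carrier by (simp add: eigenvector_def)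
  then show ?thesis
    by (intro eigenvalue_integral_over[OF S mat_over_power[OF S A]]) (auto simp: eigenvalue_def)
qed

lemma integral_over_one_plus:
  assumes S: "subring S" and x: "integral_over S x"
  shows "integral_over S (1 + x)"
proof -
  obtain k A v where A: "A \<in> mat_over S k" and v: "eigenvector A v x"
    using integral_over_eigenvector[OF S x] .
  have A_carrier: "A \<in> carrier_mat k k" using A by (simp add: mat_over_def)
  have v_carrier: "v \<in> carrier_vec k" and Av: "A *\<^sub>v v = x \<cdot>\<^sub>v v"
    using v A_carrier by (auto simp: eigenvector_def)
  have "(1\<^sub>m k + A) *\<^sub>v v = 1\<^sub>m k *\<^sub>v v + A *\<^sub>v v"
    by (rule add_mult_distrib_mat_vec[OF one_carrier_mat A_carrier v_carrier])
  also have "\<dots> = (1 + x) \<cdot>\<^sub>v v" using v_carrier Av by (simp add: add_smult_distrib_vec)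
  finally have "(1\<^sub>m k + A) *\<^sub>v v = (1 + x) \<cdot>\<^sub>v v" .
  then have "eigenvector (1\<^sub>m k + A) v (1 + x)"
    using v A_carrier by (simp add: eigenvector_def)
  then show ?thesis
    by (intro eigenvalue_integral_over[OF S mat_over_one_plus[OF S A]]) (auto simp: eigenvalue_def)
qed

lemma integral_over_unit:
  assumes S: "subring S" and y: "integral_over S y" and y_inv: "inverse y \<in> S"
  shows "y \<in> S"
proof (cases "y = 0")
  case True
  then show ?thesis using y_inv by simp
next
  case False
  obtain p where p: "p \<in> poly_over S" "lead_coeff p = 1" "poly p y = 0"
    using y unfolding integral_over_def by blast
  define k where "k = degree p"
  define z where "z = inverse y"
  have k1: "k \<ge> 1" using monic_root_degree_pos[OF p(2,3)] by (simp add: k_def)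
  have yz: "y * z = 1" using False by (simp add: z_def)
  have cancel: "y ^ j * z ^ (k - 1) = z ^ (k - 1 - j)" if "j \<le> k - 1" for j
  proof -
    have "z ^ (k - 1) = z ^ j * z ^ (k - 1 - j)" using that by (metis le_add_diff_inverse power_add)
    then have "y ^ j * z ^ (k - 1) = (y * z) ^ j * z ^ (k - 1 - j)" by (simp add: power_mult_distrib)
    then show ?thesis using yz by simp
  qed
  text \<open>Multiplying the monic equation of \<open>y\<close> by \<open>z\<^sup>k\<^sup>-\<^sup>1\<close> expresses \<open>y\<close> as a polynomial in \<open>z\<close>.\<close>
  have "y = y * (y ^ (k - 1) * z ^ (k - 1))" using cancel[of "k - 1"] by simp
  also have "\<dots> = y ^ k * z ^ (k - 1)" using k1 by (cases k) (simp_all add: mult.assoc)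
  also have "y ^ k = - (\<Sum>j<k. coeff p j * y ^ j)"
    using poly_monic_expand[OF p(2), of y] p(3) by (simp add: k_def eq_neg_iff_add_eq_0 add.commute)
  also have "- (\<Sum>j<k. coeff p j * y ^ j) * z ^ (k - 1) = - (\<Sum>j<k. coeff p j * z ^ (k - 1 - j))"
    using cancel by (simp add: sum_distrib_right mult.assoc)
  also have "\<dots> \<in> S"
    using S p(1) y_inv by (auto simp: z_def poly_over_def intro!: subring_uminus subring_sum subring_mult subring_power)
  finally show ?thesis .
qed

lemma integral_over_root:
  assumes S: "subring S" and n: "n \<ge> 1" and xn: "x ^ n \<in> S"
  shows "integral_over S x"
proof -
  define p where "p = monom 1 n + [:- (x ^ n):]"
  have "degree p = n" using n unfolding p_def
    by (subst degree_add_eq_left) (auto simp: degree_monom_eq)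
  moreover have "coeff [:- (x ^ n):] n = 0" using n by (cases n) auto
  ultimately have "lead_coeff p = 1" by (simp add: p_def coeff_monom)
  moreover have "p \<in> poly_over S"
    using S xn n by (auto simp: poly_over_def p_def coeff_monom coeff_pCons split: nat.splits
        intro: subring_uminus subring_zero subring_one)
  moreover have "poly p x = 0" by (simp add: p_def poly_monom)
  ultimately show ?thesis unfolding integral_over_def by blast
qed

lemma integral_over_mem: "subring S \<Longrightarrow> x \<in> S \<Longrightarrow> integral_over S x"
  using integral_over_root[of S 1 x] by simp

lemma valuation_domain_integrally_closed:
  assumes S: "valuation_domain S" and x: "x \<in> frac_field S" "integral_over S x"
  shows "x \<in> S"
  using valuation_domain_inverse_cases[OF S x(1)] integral_over_unit[OF valuation_domain_subring[OF S] x(2)]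
  by blast

section \<open>Almost valuation rings\<close>

text \<open>For \<open>K = frac_field D\<close> this says that \<open>D\<close> is an AV-domain.\<close>

definition almost_valuation_ring :: "'a::field set \<Rightarrow> 'a set \<Rightarrow> bool" where
  "almost_valuation_ring D K \<longleftrightarrow> (\<forall>k\<in>K. k \<noteq> 0 \<longrightarrow> (\<exists>n\<ge>1. k ^ n \<in> D \<or> inverse k ^ n \<in> D))"

locale subring_of_field =
  fixes D K :: "'a::field set"
  assumes D: "subring D" and K: "subfield K" and DK: "D \<subseteq> K"
begin

abbreviation Dt :: "'a set" where "Dt \<equiv> integral_closure D K"

lemma K_subring: "subring K"
  using K by (rule subfield_subring)

lemma almost_valuation_ringD:
  assumes "almost_valuation_ring D K" and "k \<in> K" and "k \<noteq> 0"
  obtains n where "n \<ge> 1" "k ^ n \<in> D \<or> inverse k ^ n \<in> D"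
  using assms unfolding almost_valuation_ring_def by blast

lemma AV_domain_if_almost_valuation_ring:
  assumes AV: "almost_valuation_ring D K"
  shows "AV_domain D \<and> root_ext (frac_field D) K"
proof -
  have "\<exists>n\<ge>1. (\<exists>c\<in>D. b ^ n = a ^ n * c) \<or> (\<exists>c\<in>D. a ^ n = b ^ n * c)"
    if "a \<in> D" "b \<in> D" "a \<noteq> 0" "b \<noteq> 0" for a b
  proof -
    have "b / a \<in> K" "b / a \<noteq> 0" using that DK subfield_divide[OF K] by auto
    then obtain n where "n \<ge> 1" "(b / a) ^ n \<in> D \<or> inverse (b / a) ^ n \<in> D"
      by (rule almost_valuation_ringD[OF AV])
    moreover have "b ^ n = a ^ n * (b / a) ^ n" "a ^ n = b ^ n * inverse (b / a) ^ n"
      using that by (simp_all add: power_divide power_inverse)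
    ultimately show ?thesis by blast
  qed
  then have "AV_domain D" using D by (auto simp: AV_domain_def)
  moreover have "\<exists>n\<ge>1. k ^ n \<in> frac_field D" if "k \<in> K" for k
  proof (cases "k = 0")
    case True
    then show ?thesis using subring_subset_frac_field[OF D] subring_zero[OF D] by (intro exI[of _ 1]) auto
  next
    case False
    then obtain n where "n \<ge> 1" "k ^ n \<in> D \<or> inverse (k ^ n) \<in> D"
      using AV \<open>k \<in> K\<close> by (metis almost_valuation_ringD power_inverse)
    then show ?thesis using frac_field_inverse_cases[OF D] by blast
  qed
  ultimately show ?thesis using frac_field_subset[OF K DK] by (simp add: root_ext_def)
qed

lemma almost_valuation_ring_if_AV_domain:
  assumes AV: "AV_domain D" and root: "root_ext (frac_field D) K"
  shows "almost_valuation_ring D K"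
  unfolding almost_valuation_ring_def
proof (intro ballI impI)
  fix k assume k: "k \<in> K" "k \<noteq> 0"
  obtain n where n: "n \<ge> 1" "k ^ n \<in> frac_field D" using root k by (auto simp: root_ext_def)
  then obtain a b where ab: "k ^ n = a / b" "a \<in> D" "b \<in> D" "b \<noteq> 0"
    by (auto simp: frac_field_def)
  have "a \<noteq> 0" using ab k by auto
  with AV ab obtain j where j: "j \<ge> 1"
    and "(\<exists>c\<in>D. b ^ j = a ^ j * c) \<or> (\<exists>c\<in>D. a ^ j = b ^ j * c)"
    unfolding AV_domain_def by blast
  moreover have "inverse k ^ (n * j) = (b / a) ^ j" "k ^ (n * j) = (a / b) ^ j"
    using ab by (simp_all add: power_mult power_inverse)
  ultimately have "inverse k ^ (n * j) \<in> D \<or> k ^ (n * j) \<in> D"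
    using \<open>a \<noteq> 0\<close> ab(4) by (auto simp: power_divide)
  moreover have "n * j \<ge> 1" using n j by simp
  ultimately show "\<exists>n\<ge>1. k ^ n \<in> D \<or> inverse k ^ n \<in> D" by blast
qed

lemma almost_valuation_ring_iff_AV_domain:
  "almost_valuation_ring D K \<longleftrightarrow> AV_domain D \<and> root_ext (frac_field D) K"
  using AV_domain_if_almost_valuation_ring almost_valuation_ring_if_AV_domain by blast

lemma integral_closure_root:
  assumes "x \<in> K" "n \<ge> 1" "x ^ n \<in> D"
  shows "x \<in> Dt"
  using assms integral_over_root[OF D] by (simp add: integral_closure_eq)

lemma subset_integral_closure: "D \<subseteq> Dt"
  using DK integral_over_mem[OF D] by (auto simp: integral_closure_eq)

lemma integral_closure_subset: "Dt \<subseteq> K"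
  by (auto simp: integral_closure_eq)

lemma almost_valuation_ring_integral_closure:
  assumes AV: "almost_valuation_ring D K"
  shows "Dt = {x \<in> K. \<exists>n\<ge>1. x ^ n \<in> D}"
proof (intro equalityI subsetI)
  fix x assume x: "x \<in> Dt"
  show "x \<in> {x \<in> K. \<exists>n\<ge>1. x ^ n \<in> D}"
  proof (cases "x = 0")
    case True
    then show ?thesis using x subring_zero[OF D] by (intro CollectI conjI exI[of _ 1]) (auto simp: integral_closure_eq)
  next
    case False
    have "x \<in> K" "integral_over D x" using x by (auto simp: integral_closure_eq)
    then obtain n where n: "n \<ge> 1" "x ^ n \<in> D \<or> inverse (x ^ n) \<in> D"
      using AV False by (metis almost_valuation_ringD power_inverse)
    then have "x ^ n \<in> D"
      using integral_over_unit[OF D integral_over_power[OF D \<open>integral_over D x\<close>]] by blast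
    then show ?thesis using n(1) \<open>x \<in> K\<close> by blast
  qed
qed (use integral_closure_root in blast)

context
  assumes AV: "almost_valuation_ring D K"
begin

lemma integral_closure_inverse_cases:
  assumes "k \<in> K"
  shows "k \<in> Dt \<or> inverse k \<in> Dt"
proof (cases "k = 0")
  case True
  then show ?thesis using subset_integral_closure subring_zero[OF D] by auto
next
  case False
  then obtain n where "n \<ge> 1" "k ^ n \<in> D \<or> inverse k ^ n \<in> D"
    by (rule almost_valuation_ringD[OF AV assms])
  then show ?thesis
    using integral_closure_root assms subfield_inverse[OF K assms] by blast
qed

lemma integral_closure_mult:
  assumes x: "x \<in> Dt" and y: "y \<in> Dt"
  shows "x * y \<in> Dt"
proof -
  obtain n m where n: "n \<ge> 1" "x ^ n \<in> D" and m: "m \<ge> 1" "y ^ m \<in> D"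
    using x y almost_valuation_ring_integral_closure[OF AV] by auto
  have "(x * y) ^ (n * m) = (x ^ n) ^ m * (y ^ m) ^ n"
    by (simp add: power_mult_distrib flip: power_mult) (simp add: mult.commute)
  also have "\<dots> \<in> D" using n m D by (simp add: subring_mult subring_power)
  finally show ?thesis
    using x y n m integral_closure_subset subring_mult[OF K_subring] integral_closure_root[of "x * y" "n * m"]
    by auto
qed

lemma integral_closure_add:
  assumes x: "x \<in> Dt" and y: "y \<in> Dt"
  shows "x + y \<in> Dt"
proof -
  text \<open>If \<open>y / x\<close> is integral then so is \<open>1 + y / x\<close>, hence \<open>x + y = x (1 + y / x)\<close>.\<close>
  have sum_in: "x + y \<in> Dt" if x: "x \<in> Dt" "x \<noteq> 0" and y: "y \<in> Dt" and yx: "y / x \<in> Dt" for x y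
  proof -
    have "integral_over D (y / x)" "y / x \<in> K" using yx by (auto simp: integral_closure_eq)
    then have "1 + y / x \<in> Dt"
      using integral_over_one_plus[OF D] subring_add[OF K_subring] subring_one[OF K_subring]
      by (auto simp: integral_closure_eq)
    then have "x * (1 + y / x) \<in> Dt" using integral_closure_mult[OF x(1)] by blast
    moreover have "x * (1 + y / x) = x + y" using x(2) by (simp add: field_simps)
    ultimately show ?thesis by simp
  qed
  show ?thesis
  proof (cases "x = 0 \<or> y = 0")
    case True
    then show ?thesis using x y by auto
  next
    case False
    have "y / x \<in> K" using x y integral_closure_subset subfield_divide[OF K] by blast
    then have "y / x \<in> Dt \<or> x / y \<in> Dt" using integral_closure_inverse_cases by fastforce
    then show ?thesis using sum_in[of x y] sum_in[of y x] x y False by (auto simp: add.commute)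
  qed
qed

lemma integral_closure_subring: "subring Dt"
proof -
  have "- 1 \<in> Dt" using subset_integral_closure D by (blast intro: subring_uminus subring_one)
  then have "- x \<in> Dt" if "x \<in> Dt" for x using integral_closure_mult[OF _ that] by fastforce
  then show ?thesis
    unfolding subring_def
    using subset_integral_closure subring_zero[OF D] subring_one[OF D]
      integral_closure_add integral_closure_mult by blast
qed

lemma integral_closure_valuation_domain: "valuation_domain Dt"
  unfolding valuation_domain_def
proof (intro conjI integral_closure_subring ballI)
  fix a b assume a: "a \<in> Dt" and b: "b \<in> Dt"
  show "(\<exists>c\<in>Dt. b = a * c) \<or> (\<exists>c\<in>Dt. a = b * c)"
  proof (cases "a = 0 \<or> b = 0")
    case True
    then show ?thesis using a b subset_integral_closure subring_zero[OF D] by (metis mult_zero_left mult_zero_right subsetD)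
  next
    case False
    have "b / a \<in> K" using a b integral_closure_subset subfield_divide[OF K] by blast
    then have "b / a \<in> Dt \<or> a / b \<in> Dt" using integral_closure_inverse_cases by fastforce
    moreover have "b = a * (b / a)" "a = b * (a / b)" using False by auto
    ultimately show ?thesis by metis
  qed
qed

lemma frac_field_integral_closure: "frac_field Dt = K"
proof
  show "frac_field Dt \<subseteq> K" using frac_field_subset[OF K integral_closure_subset] .
  show "K \<subseteq> frac_field Dt"
    using frac_field_inverse_cases[OF integral_closure_subring] integral_closure_inverse_cases by blast
qed

end

lemma almost_valuation_ring_iff_integral_closure:
  "almost_valuation_ring D K \<longleftrightarrow> valuation_domain Dt \<and> frac_field Dt = K \<and> root_ext D Dt"
proof
  assume AV: "almost_valuation_ring D K"
  then show "valuation_domain Dt \<and> frac_field Dt = K \<and> root_ext D Dt"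
    using integral_closure_valuation_domain frac_field_integral_closure subset_integral_closure
      almost_valuation_ring_integral_closure
    by (auto simp: root_ext_def)
next
  assume Dt: "valuation_domain Dt \<and> frac_field Dt = K \<and> root_ext D Dt"
  show "almost_valuation_ring D K"
    unfolding almost_valuation_ring_def
  proof (intro ballI impI)
    fix k assume "k \<in> K" "k \<noteq> 0"
    then have "k \<in> Dt \<or> inverse k \<in> Dt" using Dt valuation_domain_inverse_cases by blast
    then show "\<exists>n\<ge>1. k ^ n \<in> D \<or> inverse k ^ n \<in> D" using Dt by (auto simp: root_ext_def)
  qed
qed

lemma integral_closure_valuation_iff_AV_domain:
  "valuation_domain Dt \<and> frac_field Dt = K \<and> root_ext D Dt \<longleftrightarrow> AV_domain D \<and> root_ext (frac_field D) K"
  using almost_valuation_ring_iff_integral_closure almost_valuation_ring_iff_AV_domain by blast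

lemma nonunit_if_not_subfield:
  assumes "\<not> subfield D"
  obtains d where "d \<in> D" "d \<noteq> 0" "inverse d \<notin> D"
  using assms D by (auto simp: subfield_def)

lemma almost_valuation_ring_if_root_ext: "root_ext D K \<Longrightarrow> almost_valuation_ring D K"
  by (auto simp: root_ext_def almost_valuation_ring_def)

text \<open>The nonunits of \<open>D\<close> are the elements of \<open>D\<close> that are nonunits of the valuation ring \<open>Dt\<close>.\<close>

lemma almost_valuation_ring_nonunits_ideal:
  assumes AV: "almost_valuation_ring D K"
  shows "ideal {d \<in> D. d = 0 \<or> inverse d \<notin> D} D"
proof -
  let ?N = "{y \<in> Dt. y = 0 \<or> inverse y \<notin> Dt}"
  have N: "ideal ?N Dt"
    by (rule valuation_domain_nonunits_ideal[OF integral_closure_valuation_domain[OF AV]])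
  have "inverse d \<in> D" if "d \<in> D" "inverse d \<in> Dt" for d
    using that almost_valuation_ring_integral_closure[OF AV] subring_inverse_power[OF D] by auto
  then have eq: "{d \<in> D. d = 0 \<or> inverse d \<notin> D} = D \<inter> ?N"
    using subset_integral_closure by blast
  show ?thesis
    unfolding eq ideal_def
  proof (intro conjI ballI)
    show "D \<inter> ?N \<subseteq> D" "0 \<in> D \<inter> ?N" using ideal_zero[OF N] subring_zero[OF D] by auto
  next
    fix x y assume "x \<in> D \<inter> ?N" "y \<in> D \<inter> ?N"
    then show "x + y \<in> D \<inter> ?N" using ideal_add[OF N] subring_add[OF D] by blast
  next
    fix x s assume "x \<in> D \<inter> ?N" "s \<in> D"
    then show "s * x \<in> D \<inter> ?N" using ideal_mult[OF N] subring_mult[OF D] subset_integral_closure by blast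
  qed
qed

end

lemma AV_domain_iff_almost_valuation_ring:
  assumes "subring S" and "frac_field S = UNIV"
  shows "AV_domain S \<longleftrightarrow> almost_valuation_ring S UNIV"
proof -
  interpret subring_of_field S UNIV
    using assms(1) subfield_UNIV by unfold_locales simp_all
  show ?thesis using almost_valuation_ring_iff_AV_domain assms(2) by (auto simp: root_ext_def)
qed

section \<open>Discrete valuation rings\<close>

locale valuation_ring =
  fixes V M :: "'a::field set"
  assumes V: "valuation_domain V" and M: "maximal_ideal M V" and M_nonzero: "M \<noteq> {0}"
begin

lemma V_subring: "subring V"
  using V by (rule valuation_domain_subring)

lemma M_ideal: "ideal M V"
  using M by (simp add: maximal_ideal_def)

lemma M_subset: "M \<subseteq> V"
  using M_ideal by (rule ideal_subset)

lemma M_mult: "v \<in> V \<Longrightarrow> m \<in> M \<Longrightarrow> v * m \<in> M"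
  using M_ideal by (rule ideal_mult)

lemma M_mult_right: "m \<in> M \<Longrightarrow> v \<in> V \<Longrightarrow> m * v \<in> M"
  using M_mult by (metis mult.commute)

lemma one_notin_M: "1 \<notin> M"
  using M ideal_eq_if_unit[OF M_ideal, of 1] by (auto simp: maximal_ideal_def subring_one V_subring)

lemma M_nonunit: "m \<in> M \<Longrightarrow> m \<noteq> 0 \<Longrightarrow> inverse m \<notin> V"
  using M_mult[of "inverse m" m] one_notin_M by auto

lemma unit_if_notin_M: "x \<in> V \<Longrightarrow> x \<notin> M \<Longrightarrow> x \<noteq> 0 \<and> inverse x \<in> V"
  using valuation_domain_unit_if_not_maximal[OF V M] .

lemma maximal_ideal_iff: "maximal_ideal I V \<longleftrightarrow> I = M"
  using maximal_ideal_iff_nonunits[OF V_subring M_ideal one_notin_M] unit_if_notin_M by blast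

lemma ideal_pow_principal:
  assumes t: "M = (*) t ` V" and n: "n \<ge> 1"
  shows "ideal_pow V M n = (*) (t ^ n) ` V"
  using n
proof (induct n)
  case (Suc n)
  show ?case
  proof (cases "n = 0")
    case True
    then show ?thesis using t ideal_prod_right_unit[OF V_subring M_ideal] by simp
  next
    case False
    then have IH: "ideal_pow V M n = (*) (t ^ n) ` V" using Suc by simp
    have "t \<in> M" using t subring_one[OF V_subring] by force
    show ?thesis
    proof
      show "ideal_pow V M (Suc n) \<subseteq> (*) (t ^ Suc n) ` V"
        unfolding ideal_pow.simps IH
      proof (rule ideal_prod_subset[OF ideal_principal[OF V_subring]])
        show "t ^ Suc n \<in> V" using \<open>t \<in> M\<close> M_subset subring_power[OF V_subring] by blast
        fix x y assume "x \<in> M" "y \<in> (*) (t ^ n) ` V"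
        then obtain u w where "u \<in> V" "w \<in> V" "x = t * u" "y = t ^ n * w" using t by blast
        then show "x * y \<in> (*) (t ^ Suc n) ` V"
          using subring_mult[OF V_subring] by (auto simp: algebra_simps image_iff)
      qed
      show "(*) (t ^ Suc n) ` V \<subseteq> ideal_pow V M (Suc n)"
      proof
        fix z assume "z \<in> (*) (t ^ Suc n) ` V"
        then obtain v where v: "v \<in> V" "z = t * (t ^ n * v)" by auto
        have "t ^ n * v \<in> ideal_pow V M n" using IH v(1) by blast
        then show "z \<in> ideal_pow V M (Suc n)"
          using ideal_prod_mem[OF \<open>t \<in> M\<close>] v(2) by simp
      qed
    qed
  qed
qed simp

lemma DVR_generator:
  assumes "DVR V"
  obtains t where "M = (*) t ` V"
  using DVR_principal[OF assms M_ideal] by blast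

lemma generator_in_M:
  assumes "M = (*) t ` V"
  shows "t \<in> M" "t \<noteq> 0"
  using assms M_nonzero subring_one[OF V_subring] by force+

lemma Inter_powers_if_DVR:
  assumes DVR: "DVR V"
  shows "(\<Inter>n\<in>{1..}. ideal_pow V M n) = {0}"
proof -
  obtain t where gen: "M = (*) t ` V" using DVR by (rule DVR_generator)
  let ?I = "\<Inter>n\<in>{1..}. ideal_pow V M n"
  have I: "?I = (\<Inter>n\<in>{1..}. (*) (t ^ n) ` V)" using ideal_pow_principal[OF gen] by simp
  have "ideal ?I V"
    unfolding I using generator_in_M[OF gen] M_subset
    by (intro ideal_Inter ideal_principal[OF V_subring] subring_power[OF V_subring]) auto
  then obtain a where a: "a \<in> V" "?I = (*) a ` V" using DVR_principal[OF DVR] by blast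
  have "a * 1 \<in> (*) a ` V" using subring_one[OF V_subring] by (rule imageI)
  then have "a \<in> ?I" using a(2) by (simp only: mult_1_right)
  have t: "t \<in> M" "t \<noteq> 0" using generator_in_M[OF gen] by auto
  have "a = 0"
  proof (rule ccontr)
    assume "a \<noteq> 0"
    have "a / t \<in> ideal_pow V M n" if n: "n \<ge> 1" for n
    proof -
      have "a \<in> ideal_pow V M (Suc n)" by (rule INT_D[OF \<open>a \<in> ?I\<close>]) simp
      also have "ideal_pow V M (Suc n) = (*) (t ^ Suc n) ` V" by (rule ideal_pow_principal[OF gen]) simp
      finally obtain w where w: "a = t ^ Suc n * w" "w \<in> V" by (rule imageE)
      have "a / t = t ^ n * w" using w(1) t(2) by simp
      then have "a / t \<in> (*) (t ^ n) ` V" using w(2) by (rule image_eqI)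
      also have "(*) (t ^ n) ` V = ideal_pow V M n" by (rule ideal_pow_principal[OF gen n, symmetric])
      finally show ?thesis .
    qed
    then have "a / t \<in> ?I" by blast
    then have "a / t \<in> (*) a ` V" by (subst a(2)[symmetric])
    then obtain c where c: "a / t = a * c" "c \<in> V" by (rule imageE)
    have "inverse t = c" using c(1) \<open>a \<noteq> 0\<close> t(2) by (simp add: field_simps)
    then show False using M_nonunit t c(2) by blast
  qed
  have "(*) a ` V = {0}" using \<open>a = 0\<close> subring_zero[OF V_subring] by auto
  then show ?thesis using a(2) by simp
qed

lemma factor_unit_times_power:
  assumes t: "M = (*) t ` V" and Inter: "(\<Inter>n\<in>{1..}. ideal_pow V M n) = {0}"
    and y: "y \<in> V" "y \<noteq> 0"
  obtains j u where "u \<in> V" "u \<notin> M" "y = t ^ j * u"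
proof -
  have "y \<notin> (\<Inter>n\<in>{1..}. ideal_pow V M n)" using Inter y(2) by simp
  then obtain n where n: "n \<ge> 1" "y \<notin> ideal_pow V M n" by blast
  then have "y \<notin> (*) (t ^ n) ` V" using ideal_pow_principal[OF t n(1)] by simp
  have "\<exists>j u. u \<in> V \<and> u \<notin> M \<and> y = t ^ j * u" if "y \<in> V" "y \<notin> (*) (t ^ n) ` V" for n y
    using that
  proof (induct n arbitrary: y)
    case (Suc n)
    show ?case
    proof (cases "y \<in> M")
      case True
      then obtain y' where y': "y' \<in> V" "y = t * y'" using t by blast
      then have "y' \<notin> (*) (t ^ n) ` V" using Suc.prems by (auto simp: mult.assoc)
      then obtain j u where "u \<in> V" "u \<notin> M" "y' = t ^ j * u" using Suc.hyps y' by blast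
      then show ?thesis using y' by (intro exI[of _ "Suc j"] exI[of _ u]) simp
    qed (use Suc.prems in \<open>intro exI[of _ 0] exI[of _ y], simp\<close>)
  qed simp
  then show ?thesis using that y(1) \<open>y \<notin> (*) (t ^ n) ` V\<close> by blast
qed

lemma square_neq_if_Inter_powers:
  assumes Inter: "(\<Inter>n\<in>{1..}. ideal_pow V M n) = {0}"
  shows "ideal_pow V M 2 \<noteq> M"
proof
  assume sq: "ideal_pow V M 2 = M"
  have "ideal_pow V M n = M" if "n \<ge> 1" for n
    using that
  proof (induct n)
    case (Suc n)
    show ?case
      using Suc sq ideal_prod_right_unit[OF V_subring M_ideal] by (cases "n = 0") (simp_all add: numeral_2_eq_2)
  qed simp
  then have "(\<Inter>n\<in>{1..}. ideal_pow V M n) = M" by auto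
  then show False using Inter M_nonzero by simp
qed

lemma generator_if_notin_square:
  assumes t: "t \<in> M" "t \<notin> ideal_pow V M 2"
  shows "M = (*) t ` V"
proof
  show "(*) t ` V \<subseteq> M" using M_mult_right t(1) by blast
  show "M \<subseteq> (*) t ` V"
  proof
    fix m assume m: "m \<in> M"
    from valuation_domain_dvd_cases[OF V, of t m] t(1) m M_subset
    consider c where "c \<in> V" "m = t * c" | c where "c \<in> V" "t = m * c" by blast
    then show "m \<in> (*) t ` V"
    proof cases
      case 2
      have "c \<notin> M"
      proof
        assume "c \<in> M"
        then have "m * c \<in> ideal_pow V M 2"
          using ideal_prod_mem[OF m] ideal_prod_right_unit[OF V_subring M_ideal] by (simp add: numeral_2_eq_2)
        then show False using t(2) 2 by simp
      qed
      then have "m = t * inverse c" "inverse c \<in> V" using unit_if_notin_M 2 by auto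
      then show ?thesis by blast
    qed blast
  qed
qed

lemma power_in_ideal_if_Inter_powers:
  assumes t: "M = (*) t ` V" and Inter: "(\<Inter>n\<in>{1..}. ideal_pow V M n) = {0}"
    and I: "ideal I V" and z: "z \<in> I" "z \<noteq> 0"
  obtains j u where "u \<in> V" "z = t ^ j * u" "t ^ j \<in> I"
proof -
  obtain j u where ju: "u \<in> V" "u \<notin> M" "z = t ^ j * u"
    using factor_unit_times_power[OF t Inter] z ideal_subset[OF I] by blast
  have "inverse u \<in> V" "u \<noteq> 0" using unit_if_notin_M ju(1,2) by auto
  then have "t ^ j = inverse u * z" using ju(3) by simp
  then have "t ^ j \<in> I" using ideal_mult[OF I \<open>inverse u \<in> V\<close> z(1)] by simp
  with ju(1,3) show ?thesis by (rule that)
qed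

lemma principal_if_Inter_powers:
  assumes t: "M = (*) t ` V" and Inter: "(\<Inter>n\<in>{1..}. ideal_pow V M n) = {0}"
    and I: "ideal I V"
  shows "\<exists>a\<in>V. I = (*) a ` V"
proof (cases "I = {0}")
  case True
  then show ?thesis using subring_zero[OF V_subring] by (intro bexI[of _ 0]) auto
next
  case False
  then obtain y where "y \<in> I" "y \<noteq> 0" using ideal_zero[OF I] by blast
  then have "\<exists>j. t ^ j \<in> I" using power_in_ideal_if_Inter_powers[OF t Inter I] by metis
  define j0 where "j0 = (LEAST j. t ^ j \<in> I)"
  have tj0: "t ^ j0 \<in> I" unfolding j0_def using \<open>\<exists>j. t ^ j \<in> I\<close> by (rule LeastI_ex)
  have tV: "t \<in> V" using generator_in_M[OF t] M_subset by blast
  have "z \<in> (*) (t ^ j0) ` V" if z: "z \<in> I" for z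
  proof (cases "z = 0")
    case True
    then show ?thesis using subring_zero[OF V_subring] by (intro image_eqI[of _ _ 0]) simp_all
  next
    case False
    then obtain j u where ju: "u \<in> V" "z = t ^ j * u" "t ^ j \<in> I"
      using power_in_ideal_if_Inter_powers[OF t Inter I z] by blast
    then have "j0 \<le> j" unfolding j0_def by (intro Least_le)
    then have "z = t ^ j0 * (t ^ (j - j0) * u)" using ju(2) by (simp add: mult.assoc flip: power_add)
    moreover have "t ^ (j - j0) * u \<in> V"
      using tV ju(1) by (simp add: subring_mult subring_power V_subring)
    ultimately show ?thesis by (rule image_eqI)
  qed
  moreover have "(*) (t ^ j0) ` V \<subseteq> I" using ideal_mult[OF I _ tj0] by (auto simp: mult.commute)
  moreover have "t ^ j0 \<in> V" using tV subring_power[OF V_subring] by blast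
  ultimately show ?thesis by blast
qed

lemma DVR_if_Inter_powers:
  assumes Inter: "(\<Inter>n\<in>{1..}. ideal_pow V M n) = {0}"
  shows "DVR V"
proof -
  have "ideal_pow V M 2 = ideal_prod M M"
    using ideal_prod_right_unit[OF V_subring M_ideal] by (simp add: numeral_2_eq_2)
  also have "\<dots> \<subseteq> M" using M_mult_right M_subset by (intro ideal_prod_subset[OF M_ideal]) blast
  finally obtain t where "t \<in> M" "t \<notin> ideal_pow V M 2"
    using square_neq_if_Inter_powers[OF Inter] by blast
  then have t: "M = (*) t ` V" by (rule generator_if_notin_square)
  have "\<not> subfield V"
    using generator_in_M[OF t] M_nonunit M_subset by (auto simp: subfield_def)
  then show ?thesis
    unfolding DVR_def using V_subring maximal_ideal_iff principal_if_Inter_powers[OF t Inter] by auto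
qed

lemma DVR_iff_Inter_powers: "DVR V \<longleftrightarrow> (\<Inter>n\<in>{1..}. ideal_pow V M n) = {0}"
  using Inter_powers_if_DVR DVR_if_Inter_powers by blast

lemma DVR_power_subset_mult:
  assumes DVR: "DVR V" and x: "x \<in> V" "x \<noteq> 0"
  shows "\<exists>n\<ge>1. ideal_pow V M n \<subseteq> (*) x ` M"
proof -
  obtain t where t: "M = (*) t ` V" using DVR by (rule DVR_generator)
  obtain j u where ju: "u \<in> V" "u \<notin> M" "x = t ^ j * u"
    using factor_unit_times_power[OF t Inter_powers_if_DVR[OF DVR] x] .
  have u: "inverse u \<in> V" "u \<noteq> 0" using unit_if_notin_M ju by auto
  have "ideal_pow V M (Suc j) = (*) (t ^ Suc j) ` V" by (rule ideal_pow_principal[OF t]) simp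
  also have "\<dots> \<subseteq> (*) x ` M"
  proof
    fix z assume "z \<in> (*) (t ^ Suc j) ` V"
    then obtain v where v: "v \<in> V" "z = t ^ Suc j * v" by blast
    have "t * (inverse u * v) \<in> M"
      using generator_in_M[OF t] u v(1) by (intro M_mult_right subring_mult[OF V_subring])
    moreover have "z = x * (t * (inverse u * v))" using v(2) ju(3) u(2) by (simp add: field_simps)
    ultimately show "z \<in> (*) x ` M" by blast
  qed
  finally show ?thesis by (intro exI[of _ "Suc j"]) simp
qed

end

section \<open>The rings \<open>D + M\<close>\<close>

locale D_plus_M = subring_of_field D K + valuation_ring V M
  for D K V M :: "'a::field set" +
  assumes V_frac: "frac_field V = UNIV" and KV: "K \<subseteq> V"
    and V_eq: "V = {k + m | k m. k \<in> K \<and> m \<in> M}"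
begin

lemma K_inter_M: "k \<in> K \<Longrightarrow> k \<in> M \<Longrightarrow> k = 0"
  using M_nonunit[of k] subfield_inverse[OF K, of k] KV by auto

text \<open>Since \<open>V = K \<oplus> M\<close>, the residue map \<open>V \<rightarrow> V/M\<close> becomes the projection \<open>proj\<close> onto \<open>K\<close>.\<close>

definition proj :: "'a \<Rightarrow> 'a" where
  "proj x = (SOME k. k \<in> K \<and> x - k \<in> M)"

lemma proj_decomp: assumes "x \<in> V" shows "proj x \<in> K" "x - proj x \<in> M"
proof -
  obtain k m where "x = k + m" "k \<in> K" "m \<in> M" using assms V_eq by auto
  then have "\<exists>k. k \<in> K \<and> x - k \<in> M" by auto
  then have "proj x \<in> K \<and> x - proj x \<in> M" unfolding proj_def by (rule someI_ex)
  then show "proj x \<in> K" "x - proj x \<in> M" by auto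
qed

lemma proj_eqI:
  assumes k: "k \<in> K" and xk: "x - k \<in> M"
  shows "proj x = k"
proof -
  have "x = (x - k) + k" by simp
  then have x: "x \<in> V" using k xk M_subset KV subring_add[OF V_subring] by (metis subsetD)
  have "proj x - k = (x - k) - (x - proj x)" by simp
  also have "\<dots> \<in> M" using ideal_diff[OF V_subring M_ideal xk proj_decomp(2)[OF x]] .
  finally have "proj x - k \<in> M" .
  moreover have "proj x - k \<in> K" using subring_diff[OF K_subring] proj_decomp(1)[OF x] k by simp
  ultimately show ?thesis using K_inter_M by force
qed

lemma proj_K: "k \<in> K \<Longrightarrow> proj k = k"
  using proj_eqI ideal_zero[OF M_ideal] by simp

lemma proj_M: "m \<in> M \<Longrightarrow> proj m = 0"
  using proj_eqI[of 0 m] subring_zero[OF K_subring] by simp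

lemma proj_zero: "proj 0 = 0"
  using proj_M ideal_zero[OF M_ideal] .

lemma proj_one: "proj 1 = 1"
  using proj_K subring_one[OF K_subring] .

lemma proj_eq_0_iff: "x \<in> V \<Longrightarrow> proj x = 0 \<longleftrightarrow> x \<in> M"
  using proj_decomp(2)[of x] proj_M by auto

lemma proj_add:
  assumes "x \<in> V" "y \<in> V"
  shows "proj (x + y) = proj x + proj y"
proof (rule proj_eqI)
  show "proj x + proj y \<in> K" using proj_decomp assms subring_add[OF K_subring] by blast
  have "x + y - (proj x + proj y) = (x - proj x) + (y - proj y)" by simp
  then show "x + y - (proj x + proj y) \<in> M" using ideal_add[OF M_ideal] proj_decomp(2) assms by metis
qed

lemma proj_mult:
  assumes x: "x \<in> V" and y: "y \<in> V"
  shows "proj (x * y) = proj x * proj y"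
proof (rule proj_eqI)
  show "proj x * proj y \<in> K" using proj_decomp assms subring_mult[OF K_subring] by blast
  have "x * y - proj x * proj y = (x - proj x) * y + proj x * (y - proj y)" by (simp add: algebra_simps)
  moreover have "(x - proj x) * y \<in> M" using M_mult_right proj_decomp(2)[OF x] y by blast
  moreover have "proj x * (y - proj y) \<in> M" using M_mult proj_decomp(2)[OF y] proj_decomp(1)[OF x] KV by blast
  ultimately show "x * y - proj x * proj y \<in> M" using ideal_add[OF M_ideal] by metis
qed

lemma proj_power: "x \<in> V \<Longrightarrow> proj (x ^ n) = proj x ^ n"
  by (induct n) (simp_all add: proj_one proj_mult subring_power[OF V_subring])

lemma proj_inverse:
  assumes x: "x \<in> V" "x \<notin> M"
  shows "proj (inverse x) = inverse (proj x)"
proof -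
  have u: "x \<noteq> 0" "inverse x \<in> V" using unit_if_notin_M[OF x] by auto
  have "proj x * proj (inverse x) = 1"
    using proj_mult[OF x(1) u(2)] u proj_one by simp
  then show ?thesis by (metis inverse_unique)
qed

lemma proj_poly:
  assumes "p \<in> poly_over V" and x: "x \<in> V"
  shows "poly (map_poly proj p) (proj x) = proj (poly p x) \<and> poly p x \<in> V"
  using assms(1)
proof (induct p rule: pCons_induct)
  case 0
  then show ?case using proj_zero subring_zero[OF V_subring] by simp
next
  case (pCons a p)
  have a: "a \<in> V" and "p \<in> poly_over V"
    using pCons.prems by (auto simp: poly_over_def) (metis coeff_pCons_0, metis coeff_pCons_Suc)
  then have IH: "poly (map_poly proj p) (proj x) = proj (poly p x)" "poly p x \<in> V"
    using pCons.hyps by auto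
  have xp: "x * poly p x \<in> V" using IH x subring_mult[OF V_subring] by blast
  have "poly (map_poly proj (pCons a p)) (proj x) = proj a + proj x * proj (poly p x)"
    using IH proj_zero by (simp add: Polynomial.map_poly_pCons)
  also have "\<dots> = proj (poly (pCons a p) x)" using a x IH xp by (simp add: proj_add proj_mult)
  finally show ?case using a xp subring_add[OF V_subring] by auto
qed

definition R :: "'a set" where
  "R = {d + m | d m. d \<in> D \<and> m \<in> M}"

lemma R_eq: "R = {x \<in> V. proj x \<in> D}"
proof (intro equalityI subsetI)
  fix x assume "x \<in> R"
  then obtain d m where x: "x = d + m" "d \<in> D" "m \<in> M" by (auto simp: R_def)
  have "x \<in> V" using x DK KV M_subset subring_add[OF V_subring] by blast
  moreover have "proj x = d" using x DK by (intro proj_eqI) auto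
  ultimately show "x \<in> {x \<in> V. proj x \<in> D}" using x by simp
next
  fix x assume x: "x \<in> {x \<in> V. proj x \<in> D}"
  then have "x = proj x + (x - proj x)" "x - proj x \<in> M" using proj_decomp by auto
  then show "x \<in> R" using x unfolding R_def by blast
qed

lemma R_subset_V: "R \<subseteq> V"
  by (auto simp: R_eq)

lemma M_subset_R: "M \<subseteq> R"
  using M_subset proj_M subring_zero[OF D] by (auto simp: R_eq)

lemma D_subset_R: "D \<subseteq> R"
  using DK KV proj_K by (auto simp: R_eq)

lemma R_inter_K: "x \<in> R \<Longrightarrow> x \<in> K \<Longrightarrow> x \<in> D"
  using proj_K by (auto simp: R_eq)

lemma power_in_R_iff: "x \<in> V \<Longrightarrow> x ^ n \<in> R \<longleftrightarrow> proj x ^ n \<in> D"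
  using subring_power[OF V_subring] proj_power by (simp add: R_eq)

lemma R_subring: "subring R"
proof -
  have "proj (- x) = - proj x" if "x \<in> V" for x
    using proj_add[OF that subring_uminus[OF V_subring that]] proj_zero
    by (simp add: eq_neg_iff_add_eq_0 add.commute)
  then show ?thesis
    unfolding subring_def R_eq using V_subring D
    by (simp add: subring_zero subring_one subring_add subring_mult subring_uminus
        proj_zero proj_one proj_add proj_mult)
qed

lemma M_ideal_R: "ideal M R"
  using ideal_zero[OF M_ideal] ideal_add[OF M_ideal] M_mult R_subset_V M_subset_R
  unfolding ideal_def by blast

lemma R_eq_V_iff: "R = V \<longleftrightarrow> D = K"
proof
  assume "R = V"
  then show "D = K" using R_inter_K KV DK by blast
next
  assume "D = K"
  show "R = V" unfolding R_eq using proj_decomp \<open>D = K\<close> by auto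
qed

lemma D_eq_K_conj_iff: "D = K \<and> P \<longleftrightarrow> R = V \<and> P"
  using R_eq_V_iff by blast

lemma frac_field_R: "frac_field R = UNIV"
proof -
  obtain m where m: "m \<in> M" "m \<noteq> 0" using M_nonzero ideal_zero[OF M_ideal] by blast
  have "x \<in> frac_field R" for x
  proof -
    have "x \<in> frac_field V" using V_frac by simp
    then obtain a b where ab: "x = a / b" "a \<in> V" "b \<in> V" "b \<noteq> 0"
      by (auto simp: frac_field_def)
    have "x = (a * m) / (b * m)" "b * m \<noteq> 0" using ab m by simp_all
    moreover have "a * m \<in> R" "b * m \<in> R" using ab m M_mult M_subset_R by auto
    ultimately show ?thesis by (metis frac_fieldI)
  qed
  then show ?thesis by auto
qed

lemma ideal_pow_R_M: "n \<ge> 1 \<Longrightarrow> ideal_pow R M n = ideal_pow V M n"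
  using ideal_pow_change_base ideal_prod_right_unit[OF R_subring M_ideal_R]
    ideal_prod_right_unit[OF V_subring M_ideal] by metis

lemma eq_V_if_DVR:
  assumes S: "DVR S" "M \<subseteq> S" "S \<subseteq> V"
  shows "S = V"
proof -
  have "ideal M S"
    using S(2,3) ideal_zero[OF M_ideal] ideal_add[OF M_ideal] M_mult unfolding ideal_def by blast
  then obtain a where a: "a \<in> S" "M = (*) a ` S" using DVR_principal[OF S(1)] by blast
  have "subring S" using S(1) by (simp add: DVR_def)
  then have "a \<in> M" "a \<noteq> 0" using a subring_one M_nonzero by force+
  have "v \<in> S" if "v \<in> V" for v
  proof -
    have "a * v \<in> M" using M_mult_right[OF \<open>a \<in> M\<close> that] .
    then obtain s where "s \<in> S" "a * v = a * s" using a by auto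
    then show ?thesis using \<open>a \<noteq> 0\<close> by simp
  qed
  then show ?thesis using S(3) by blast
qed

lemma DVR_R_iff: "DVR R \<longleftrightarrow> D = K \<and> DVR V"
proof
  assume "DVR R"
  then have "R = V" using M_subset_R R_subset_V by (intro eq_V_if_DVR)
  then show "D = K \<and> DVR V" using \<open>DVR R\<close> R_eq_V_iff by simp
qed (use R_eq_V_iff in simp)

lemma rational_valuation_domain_R_iff:
  "rational_valuation_domain R \<longleftrightarrow> D = K \<and> rational_valuation_domain V"
proof
  assume R_rational: "rational_valuation_domain R"
  have "K \<subseteq> D"
  proof
    fix k assume k: "k \<in> K"
    show "k \<in> D"
    proof (rule ccontr)
      assume "k \<notin> D"
      then have "k \<notin> R" using k R_inter_K by blast
      then have "inverse k \<in> R"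
        using R_rational frac_field_R valuation_domain_inverse_cases
        by (auto simp: rational_valuation_domain_def)
      text \<open>In a rank one valuation ring the powers of \<open>k\<close> cannot all stay above the nonzero \<open>m\<close>.\<close>
      obtain m where m: "m \<in> M" "m \<noteq> 0" using M_nonzero ideal_zero[OF M_ideal] by blast
      then obtain n where "m * inverse (inverse k) ^ n \<notin> R"
        using rational_valuation_domain_archimedean[OF R_rational frac_field_R \<open>inverse k \<in> R\<close>]
          \<open>k \<notin> R\<close> by auto
      moreover have "m * k ^ n \<in> R"
        using M_mult_right[OF m(1)] subring_power[OF V_subring] k KV M_subset_R by blast
      ultimately show False by simp
    qed
  qed
  then show "D = K \<and> rational_valuation_domain V" using DK R_rational R_eq_V_iff by auto
qed (use R_eq_V_iff in simp)

lemma integral_over_R: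
  assumes x: "integral_over R x"
  shows "x \<in> V" "integral_over D (proj x)"
proof -
  show xV: "x \<in> V"
    using valuation_domain_integrally_closed[OF V] V_frac integral_over_mono[OF x R_subset_V] by blast
  obtain p where p: "p \<in> poly_over R" "lead_coeff p = 1" "poly p x = 0"
    using x unfolding integral_over_def by blast
  have "p \<in> poly_over V" using p(1) R_subset_V by (auto simp: poly_over_def)
  have "map_poly proj p \<in> poly_over D"
    using p(1) proj_zero by (auto simp: poly_over_def coeff_map_poly R_eq)
  moreover have "lead_coeff (map_poly proj p) = 1"
    using lead_coeff_map_poly_nz[of proj p] p(2) proj_zero proj_one by simp
  moreover have "poly (map_poly proj p) (proj x) = 0"
    using proj_poly[OF \<open>p \<in> poly_over V\<close> xV] p(3) proj_zero by simp
  ultimately show "integral_over D (proj x)" unfolding integral_over_def by blast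
qed

lemma proj_integral_closure_R: "proj ` integral_closure R UNIV = Dt"
proof (intro equalityI subsetI)
  fix y assume "y \<in> proj ` integral_closure R UNIV"
  then obtain x where "integral_over R x" "y = proj x" by (auto simp: integral_closure_eq)
  then show "y \<in> Dt" using integral_over_R proj_decomp(1) by (auto simp: integral_closure_eq)
next
  fix k assume k: "k \<in> Dt"
  then have "integral_over R k" "proj k = k"
    using integral_over_mono D_subset_R proj_K by (auto simp: integral_closure_eq)
  then show "k \<in> proj ` integral_closure R UNIV" by (force simp: integral_closure_eq)
qed

lemma power_in_R_iff_integral:
  "x \<in> integral_closure R UNIV \<Longrightarrow> x ^ n \<in> R \<longleftrightarrow> proj x ^ n \<in> D"
  using power_in_R_iff integral_over_R(1) by (simp add: integral_closure_eq)

lemma R_subset_integral_closure: "R \<subseteq> integral_closure R UNIV"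
  using integral_over_mem[OF R_subring] by (auto simp: integral_closure_eq)

lemma root_ext_R_iff: "root_ext R (integral_closure R UNIV) \<longleftrightarrow> root_ext D Dt"
proof -
  have "root_ext R (integral_closure R UNIV) \<longleftrightarrow> (\<forall>x\<in>integral_closure R UNIV. \<exists>n\<ge>1. proj x ^ n \<in> D)"
    using R_subset_integral_closure power_in_R_iff_integral by (auto simp: root_ext_def)
  also have "\<dots> \<longleftrightarrow> (\<forall>k\<in>Dt. \<exists>n\<ge>1. k ^ n \<in> D)"
    unfolding proj_integral_closure_R[symmetric] by blast
  also have "\<dots> \<longleftrightarrow> root_ext D Dt"
    using subset_integral_closure by (auto simp: root_ext_def)
  finally show ?thesis .
qed

lemma bounded_root_ext_R_iff: "bounded_root_ext R (integral_closure R UNIV) \<longleftrightarrow> bounded_root_ext D Dt"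
proof -
  have "bounded_root_ext R (integral_closure R UNIV) \<longleftrightarrow>
      (\<exists>n\<ge>1. \<forall>x\<in>integral_closure R UNIV. proj x ^ n \<in> D)"
    using R_subset_integral_closure power_in_R_iff_integral by (auto simp: bounded_root_ext_def)
  also have "\<dots> \<longleftrightarrow> (\<exists>n\<ge>1. \<forall>k\<in>Dt. k ^ n \<in> D)"
    unfolding proj_integral_closure_R[symmetric] by blast
  also have "\<dots> \<longleftrightarrow> bounded_root_ext D Dt"
    using subset_integral_closure by (auto simp: bounded_root_ext_def)
  finally show ?thesis .
qed

lemma almost_valuation_ring_R_iff: "almost_valuation_ring R UNIV \<longleftrightarrow> almost_valuation_ring D K"
proof
  assume AV: "almost_valuation_ring R UNIV"
  show "almost_valuation_ring D K"
    unfolding almost_valuation_ring_def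
  proof (intro ballI impI)
    fix k assume k: "k \<in> K" "k \<noteq> 0"
    then obtain n where "n \<ge> 1" "k ^ n \<in> R \<or> inverse k ^ n \<in> R"
      using AV by (auto simp: almost_valuation_ring_def)
    moreover have "k ^ n \<in> K" "inverse k ^ n \<in> K"
      using k subring_power[OF K_subring] subfield_inverse[OF K] by auto
    ultimately show "\<exists>n\<ge>1. k ^ n \<in> D \<or> inverse k ^ n \<in> D" using R_inter_K by blast
  qed
next
  assume AV: "almost_valuation_ring D K"
  have V_case: "\<exists>n\<ge>1. c ^ n \<in> R \<or> inverse c ^ n \<in> R" if c: "c \<in> V" for c
  proof (cases "c \<in> M")
    case True
    then show ?thesis using M_subset_R by (intro exI[of _ 1]) auto
  next
    case False
    then have "proj c \<in> K" "proj c \<noteq> 0" using proj_decomp(1)[OF c] proj_eq_0_iff[OF c] by auto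
    then obtain n where "n \<ge> 1" "proj c ^ n \<in> D \<or> inverse (proj c) ^ n \<in> D"
      by (rule almost_valuation_ringD[OF AV])
    moreover have "inverse c \<in> V" "proj (inverse c) = inverse (proj c)"
      using unit_if_notin_M[OF c False] proj_inverse[OF c False] by auto
    ultimately show ?thesis using power_in_R_iff c by metis
  qed
  show "almost_valuation_ring R UNIV"
    unfolding almost_valuation_ring_def
  proof (intro ballI impI)
    fix x :: 'a
    have "x \<in> V \<or> inverse x \<in> V" using valuation_domain_inverse_cases[OF V] V_frac by blast
    then show "\<exists>n\<ge>1. x ^ n \<in> R \<or> inverse x ^ n \<in> R" using V_case[of x] V_case[of "inverse x"] by auto
  qed
qed

lemma AV_domain_R_iff: "AV_domain R \<longleftrightarrow> almost_valuation_ring D K"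
  using AV_domain_iff_almost_valuation_ring[OF R_subring frac_field_R] almost_valuation_ring_R_iff by simp

lemma AV_domain_R_iff_integral_closure:
  "AV_domain R \<longleftrightarrow> valuation_domain Dt \<and> frac_field Dt = K \<and> root_ext D Dt"
  using AV_domain_R_iff almost_valuation_ring_iff_integral_closure by simp

lemma maximal_ideal_R_iff:
  assumes D_local: "ideal {d \<in> D. d = 0 \<or> inverse d \<notin> D} D"
  shows "maximal_ideal Q R \<longleftrightarrow> Q = {x \<in> R. proj x \<in> {d \<in> D. d = 0 \<or> inverse d \<notin> D}}"
proof (rule maximal_ideal_iff_nonunits[OF R_subring])
  let ?ND = "{d \<in> D. d = 0 \<or> inverse d \<notin> D}"
  show "ideal {x \<in> R. proj x \<in> ?ND} R"
    unfolding ideal_def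
  proof (intro conjI ballI)
    show "{x \<in> R. proj x \<in> ?ND} \<subseteq> R" by blast
    show "0 \<in> {x \<in> R. proj x \<in> ?ND}" using proj_zero subring_zero[OF R_subring] subring_zero[OF D] by simp
  next
    fix x y assume x: "x \<in> {x \<in> R. proj x \<in> ?ND}" and y: "y \<in> {x \<in> R. proj x \<in> ?ND}"
    then have "proj (x + y) = proj x + proj y" using proj_add R_subset_V by blast
    then show "x + y \<in> {x \<in> R. proj x \<in> ?ND}"
      using x y ideal_add[OF D_local] subring_add[OF R_subring] by simp
  next
    fix x s assume x: "x \<in> {x \<in> R. proj x \<in> ?ND}" and s: "s \<in> R"
    then have "proj (s * x) = proj s * proj x" "proj s \<in> D" using proj_mult R_subset_V R_eq by auto
    then show "s * x \<in> {x \<in> R. proj x \<in> ?ND}"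
      using x s ideal_mult[OF D_local] subring_mult[OF R_subring] by simp
  qed
  show "1 \<notin> {x \<in> R. proj x \<in> ?ND}" using proj_one subring_one[OF D] by simp
  fix x assume x: "x \<in> R" "x \<notin> {x \<in> R. proj x \<in> ?ND}"
  then have "x \<in> V" "proj x \<noteq> 0" "inverse (proj x) \<in> D" using R_eq by auto
  then have "x \<notin> M" using proj_eq_0_iff by blast
  then show "x \<noteq> 0 \<and> inverse x \<in> R"
    using unit_if_notin_M proj_inverse \<open>x \<in> V\<close> \<open>inverse (proj x) \<in> D\<close> by (simp add: R_eq)
qed

lemma maximal_ideal_R_iff_M:
  assumes "subfield D"
  shows "maximal_ideal Q R \<longleftrightarrow> Q = M"
proof -
  have ND: "{d \<in> D. d = 0 \<or> inverse d \<notin> D} = {0}"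
    using assms subring_zero[OF D] subfield_inverse by (auto simp: subfield_def)
  have "ideal {0} D" using subring_zero[OF D] by (simp add: ideal_def)
  moreover have "{x \<in> R. proj x \<in> {0}} = M"
    using proj_eq_0_iff R_subset_V M_subset_R by auto
  ultimately show ?thesis using maximal_ideal_R_iff ND by simp
qed

lemma M_subset_ideal_pow:
  assumes d: "d \<in> Q" "d \<in> K" "d \<noteq> 0"
  shows "M \<subseteq> ideal_pow R Q n"
proof (induct n)
  case 0
  then show ?case using M_subset_R by simp
next
  case (Suc n)
  show ?case
  proof
    fix m assume "m \<in> M"
    then have "inverse d * m \<in> ideal_pow R Q n"
      using Suc M_mult subfield_inverse[OF K d(2)] KV by blast
    then have "d * (inverse d * m) \<in> ideal_pow R Q (Suc n)" using ideal_prod_mem[OF d(1)] by simp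
    then show "m \<in> ideal_pow R Q (Suc n)" using d(3) by (simp add: field_simps)
  qed
qed

lemma nonunit_in_maximal_ideal:
  assumes AV: "almost_valuation_ring D K" and Q: "maximal_ideal Q R"
    and d: "d \<in> D" "d \<noteq> 0" "inverse d \<notin> D"
  shows "d \<in> Q"
proof -
  have "Q = {x \<in> R. proj x \<in> {d \<in> D. d = 0 \<or> inverse d \<notin> D}}"
    using Q maximal_ideal_R_iff[OF almost_valuation_ring_nonunits_ideal[OF AV]] by blast
  moreover have "d \<in> R" "proj d = d" using d(1) D_subset_R proj_K DK by auto
  ultimately show ?thesis using d by simp
qed

lemma subfield_if_Inter_powers:
  assumes AV: "almost_valuation_ring D K" and Q: "maximal_ideal Q R"
    and Inter: "(\<Inter>n\<in>{1..}. ideal_pow R Q n) = {0}"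
  shows "subfield D"
proof (rule ccontr)
  assume "\<not> subfield D"
  then obtain d where d: "d \<in> D" "d \<noteq> 0" "inverse d \<notin> D" by (rule nonunit_if_not_subfield)
  then have "M \<subseteq> ideal_pow R Q n" for n
    using M_subset_ideal_pow nonunit_in_maximal_ideal[OF AV Q d] DK by blast
  then have "M \<subseteq> {0}" using Inter by blast
  then show False using M_nonzero ideal_zero[OF M_ideal] by blast
qed

lemma subfield_if_power_subset_M:
  assumes AV: "almost_valuation_ring D K" and Q: "maximal_ideal Q R"
    and pow: "ideal_pow R Q n \<subseteq> M"
  shows "subfield D"
proof (rule ccontr)
  assume "\<not> subfield D"
  then obtain d where d: "d \<in> D" "d \<noteq> 0" "inverse d \<notin> D" by (rule nonunit_if_not_subfield)
  then have "d ^ n \<in> M" using ideal_pow_power_mem[OF R_subring] nonunit_in_maximal_ideal[OF AV Q] pow by blast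
  moreover have "d ^ n \<in> K" using d DK subring_power[OF K_subring] by blast
  ultimately have "d ^ n = 0" by (rule K_inter_M[rotated])
  then show False using d(2) by simp
qed

lemma Inter_powers_R_M: "(\<Inter>n\<in>{1..}. ideal_pow R M n) = (\<Inter>n\<in>{1..}. ideal_pow V M n)"
  using ideal_pow_R_M by simp

lemma integral_closure_R_eq_V:
  assumes AV: "almost_valuation_ring D K" and "subfield D"
  shows "integral_closure R UNIV = V"
proof (intro equalityI subsetI)
  fix x assume "x \<in> integral_closure R UNIV"
  then show "x \<in> V" using integral_over_R by (simp add: integral_closure_eq)
next
  fix x assume x: "x \<in> V"
  have "\<exists>n\<ge>1. x ^ n \<in> R"
  proof (cases "proj x = 0")
    case True
    then show ?thesis using x proj_eq_0_iff M_subset_R by (intro exI[of _ 1]) auto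
  next
    case False
    then obtain n where "n \<ge> 1" "proj x ^ n \<in> D \<or> inverse (proj x ^ n) \<in> D"
      using almost_valuation_ringD[OF AV proj_decomp(1)[OF x]] by (metis power_inverse)
    then show ?thesis
      using subfield_inverse[OF \<open>subfield D\<close>] power_in_R_iff[OF x] by (metis inverse_inverse_eq)
  qed
  then show "x \<in> integral_closure R UNIV"
    using integral_over_root[OF R_subring] by (auto simp: integral_closure_eq)
qed

lemma maximal_ideal_R_exists:
  assumes "almost_valuation_ring D K"
  obtains Q where "maximal_ideal Q R"
  using maximal_ideal_R_iff[OF almost_valuation_ring_nonunits_ideal[OF assms]] by blast

lemma ideal_mult_M: "x \<in> V \<Longrightarrow> ideal ((*) x ` M) R"
proof -
  assume x: "x \<in> V"
  show ?thesis
    unfolding ideal_def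
  proof (intro conjI ballI)
    show "(*) x ` M \<subseteq> R" using M_mult[OF x] M_subset_R by blast
    show "0 \<in> (*) x ` M" using ideal_zero[OF M_ideal] by force
  next
    fix a b assume "a \<in> (*) x ` M" "b \<in> (*) x ` M"
    then show "a + b \<in> (*) x ` M"
      using ideal_add[OF M_ideal] by (auto simp: distrib_left[symmetric])
  next
    fix a s assume "a \<in> (*) x ` M" "s \<in> R"
    then obtain m where "m \<in> M" "s * a = x * (s * m)" by (auto simp: mult.left_commute)
    then show "s * a \<in> (*) x ` M" using M_mult R_subset_V \<open>s \<in> R\<close> by blast
  qed
qed

lemma Inter_powers_if_power_subset:
  assumes pow: "\<forall>A. ideal A R \<and> {0} \<subset> A \<and> A \<subset> R \<longrightarrow> (\<exists>n. ideal_pow R M n \<subseteq> A)"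
  shows "(\<Inter>n\<in>{1..}. ideal_pow R M n) = {0}"
proof (rule ccontr)
  assume "(\<Inter>n\<in>{1..}. ideal_pow R M n) \<noteq> {0}"
  moreover have "0 \<in> ideal_pow R M n" if "n \<ge> 1" for n
    using ideal_pow_power_mem[OF R_subring ideal_zero[OF M_ideal], of n] that by (simp add: power_0_left)
  ultimately obtain x where x: "x \<in> (\<Inter>n\<in>{1..}. ideal_pow R M n)" "x \<noteq> 0" by blast
  have "x \<in> M" using INT_D[OF x(1), of 1] ideal_prod_right_unit[OF R_subring M_ideal_R] by simp
  text \<open>The ideal \<open>x M\<close> contains no power of \<open>M\<close>, as \<open>x\<close> itself lies in all of them.\<close>
  let ?A = "(*) x ` M"
  obtain m where m: "m \<in> M" "m \<noteq> 0" using M_nonzero ideal_zero[OF M_ideal] by blast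
  have "0 \<in> ?A" using ideal_zero[OF M_ideal] by (rule image_eqI[rotated]) simp
  moreover have "x * m \<in> ?A" "x * m \<noteq> 0" using m x(2) by auto
  ultimately have "{0} \<subset> ?A" by blast
  have "?A \<subseteq> M" using M_mult M_subset \<open>x \<in> M\<close> by blast
  then have "?A \<subset> R" using M_subset_R one_notin_M subring_one[OF R_subring] by blast
  have "ideal ?A R" using \<open>x \<in> M\<close> M_subset by (intro ideal_mult_M) blast
  then obtain n where n: "ideal_pow R M n \<subseteq> ?A"
    using pow[THEN spec[of _ ?A]] \<open>{0} \<subset> ?A\<close> \<open>?A \<subset> R\<close> by blast
  have "n \<noteq> 0"
  proof
    assume "n = 0"
    then have "R \<subseteq> ?A" using n by simp
    then show False using \<open>?A \<subset> R\<close> by blast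
  qed
  then have "x \<in> ideal_pow R M n" using INT_D[OF x(1), of n] by simp
  then obtain m' where "m' \<in> M" "x = x * m'" using n by blast
  then show False using x(2) one_notin_M by (metis mult_cancel_left1)
qed

lemma power_subset_if_DVR:
  assumes DVR: "DVR V" and A: "ideal A R" "{0} \<subset> A"
  shows "\<exists>n. ideal_pow R M n \<subseteq> A"
proof -
  obtain x where x: "x \<in> A" "x \<noteq> 0" using A(2) by blast
  then have "x \<in> V" using ideal_subset[OF A(1)] R_subset_V by blast
  then obtain n where n: "n \<ge> 1" "ideal_pow V M n \<subseteq> (*) x ` M"
    using DVR_power_subset_mult[OF DVR _ x(2)] by blast
  have "(*) x ` M \<subseteq> A" using ideal_mult[OF A(1) _ x(1)] M_subset_R by (auto simp: mult.commute)
  then show ?thesis using n ideal_pow_R_M by blast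
qed

lemma AV_DVR_integral_closure_iff:
  "AV_domain R \<and> DVR (integral_closure R UNIV) \<longleftrightarrow> AV_domain R \<and> DVR V \<and> subfield D"
proof
  assume h: "AV_domain R \<and> DVR (integral_closure R UNIV)"
  have "integral_closure R UNIV = V"
    using h M_subset_R R_subset_integral_closure integral_over_R
    by (intro eq_V_if_DVR) (auto simp: integral_closure_eq)
  text \<open>The inverse of \<open>d \<in> D\<close> is integral over \<open>R\<close>, so over \<open>D\<close>, and hence lies in \<open>D\<close>.\<close>
  have "inverse d \<in> D" if "d \<in> D" for d
  proof -
    have "inverse d \<in> K" using that DK subfield_inverse[OF K] by blast
    then have "integral_over R (inverse d)"
      using KV \<open>integral_closure R UNIV = V\<close> by (auto simp: integral_closure_eq)
    then have "integral_over D (inverse d)" using integral_over_R(2) proj_K \<open>inverse d \<in> K\<close> by metis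
    then show ?thesis using integral_over_unit[OF D] that by simp
  qed
  then show "AV_domain R \<and> DVR V \<and> subfield D"
    using h D \<open>integral_closure R UNIV = V\<close> by (simp add: subfield_def)
next
  assume "AV_domain R \<and> DVR V \<and> subfield D"
  then show "AV_domain R \<and> DVR (integral_closure R UNIV)"
    using integral_closure_R_eq_V AV_domain_R_iff by simp
qed

lemma AV_Inter_powers_iff:
  "AV_domain R \<and> (\<forall>Q. maximal_ideal Q R \<longrightarrow> (\<Inter>n\<in>{1..}. ideal_pow R Q n) = {0}) \<longleftrightarrow>
    AV_domain R \<and> DVR V \<and> subfield D"
proof
  assume h: "AV_domain R \<and> (\<forall>Q. maximal_ideal Q R \<longrightarrow> (\<Inter>n\<in>{1..}. ideal_pow R Q n) = {0})"
  then have AV: "almost_valuation_ring D K" using AV_domain_R_iff by simp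
  obtain Q where Q: "maximal_ideal Q R" using AV by (rule maximal_ideal_R_exists)
  then have "subfield D" using h subfield_if_Inter_powers[OF AV] by blast
  then have "(\<Inter>n\<in>{1..}. ideal_pow V M n) = {0}"
    using h maximal_ideal_R_iff_M Inter_powers_R_M by metis
  then show "AV_domain R \<and> DVR V \<and> subfield D"
    using h \<open>subfield D\<close> DVR_iff_Inter_powers by simp
next
  assume "AV_domain R \<and> DVR V \<and> subfield D"
  then show "AV_domain R \<and> (\<forall>Q. maximal_ideal Q R \<longrightarrow> (\<Inter>n\<in>{1..}. ideal_pow R Q n) = {0})"
    using maximal_ideal_R_iff_M Inter_powers_R_M DVR_iff_Inter_powers by simp
qed

lemma AV_power_subset_iff:
  "AV_domain R \<and> (\<forall>Q. maximal_ideal Q R \<longrightarrow>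
      (\<forall>A. ideal A R \<and> {0} \<subset> A \<and> A \<subset> R \<longrightarrow> (\<exists>n. ideal_pow R Q n \<subseteq> A))) \<longleftrightarrow>
    AV_domain R \<and> DVR V \<and> subfield D"
proof
  assume h: "AV_domain R \<and> (\<forall>Q. maximal_ideal Q R \<longrightarrow>
      (\<forall>A. ideal A R \<and> {0} \<subset> A \<and> A \<subset> R \<longrightarrow> (\<exists>n. ideal_pow R Q n \<subseteq> A)))"
  then have AV: "almost_valuation_ring D K" using AV_domain_R_iff by simp
  obtain Q where Q: "maximal_ideal Q R" using AV by (rule maximal_ideal_R_exists)
  have "{0} \<subset> M" "M \<subset> R"
    using M_nonzero ideal_zero[OF M_ideal] M_subset_R one_notin_M subring_one[OF R_subring] by blast+
  then obtain n where "ideal_pow R Q n \<subseteq> M" using h Q M_ideal_R by blast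
  then have "subfield D" by (rule subfield_if_power_subset_M[OF AV Q])
  then have "(\<Inter>n\<in>{1..}. ideal_pow V M n) = {0}"
    using h maximal_ideal_R_iff_M Inter_powers_if_power_subset Inter_powers_R_M by metis
  then show "AV_domain R \<and> DVR V \<and> subfield D"
    using h \<open>subfield D\<close> DVR_iff_Inter_powers by simp
next
  assume "AV_domain R \<and> DVR V \<and> subfield D"
  then show "AV_domain R \<and> (\<forall>Q. maximal_ideal Q R \<longrightarrow>
      (\<forall>A. ideal A R \<and> {0} \<subset> A \<and> A \<subset> R \<longrightarrow> (\<exists>n. ideal_pow R Q n \<subseteq> A)))"
    using maximal_ideal_R_iff_M power_subset_if_DVR by simp
qed

lemma AV_DVR_subfield_iff:
  "AV_domain R \<and> DVR V \<and> subfield D \<longleftrightarrow>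
    DVR V \<and> D = frac_field D \<and> subfield (frac_field D) \<and> root_ext (frac_field D) K"
proof
  assume h: "AV_domain R \<and> DVR V \<and> subfield D"
  then have "frac_field D = D" by (simp add: frac_field_of_subfield)
  then show "DVR V \<and> D = frac_field D \<and> subfield (frac_field D) \<and> root_ext (frac_field D) K"
    using h AV_domain_R_iff almost_valuation_ring_iff_AV_domain by simp
next
  assume "DVR V \<and> D = frac_field D \<and> subfield (frac_field D) \<and> root_ext (frac_field D) K"
  then show "AV_domain R \<and> DVR V \<and> subfield D"
    using AV_domain_R_iff almost_valuation_ring_if_root_ext by metis
qed

end

theorem theorem13:
  fixes V M K D F Dt R Rbar :: "'a::field set"
  assumes V: "valuation_domain V" and VL: "frac_field V = UNIV"
    and M: "maximal_ideal M V" and M0: "M \<noteq> {0}"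
    and K: "subfield K" and KV: "K \<subseteq> V"
    and VKM: "V = {k + m | k m. k \<in> K \<and> m \<in> M}"
    and D: "subring D" and DK: "D \<subseteq> K"
    and F: "F = frac_field D"
    and Dt: "Dt = integral_closure D K"
    and R: "R = {d + m | d m. d \<in> D \<and> m \<in> M}"
    and Rbar: "Rbar = integral_closure R UNIV"
  shows
    "(((DVR R \<longleftrightarrow> D = K \<and> DVR V) \<and> (D = K \<and> DVR V \<longleftrightarrow> R = V \<and> DVR V)) \<and>
     ((rational_valuation_domain R \<longleftrightarrow> D = K \<and> rational_valuation_domain V) \<and>
      (D = K \<and> rational_valuation_domain V \<longleftrightarrow> R = V \<and> rational_valuation_domain V))) \<and>
    ((root_ext R Rbar \<longleftrightarrow> root_ext D Dt) \<and>
     (bounded_root_ext R Rbar \<longleftrightarrow> bounded_root_ext D Dt)) \<and>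
    ((AV_domain R \<longleftrightarrow> valuation_domain Dt \<and> frac_field Dt = K \<and> root_ext D Dt) \<and>
     (valuation_domain Dt \<and> frac_field Dt = K \<and> root_ext D Dt \<longleftrightarrow> AV_domain D \<and> root_ext F K)) \<and>
    (((AV_domain R \<and> DVR Rbar) \<longleftrightarrow>
        (AV_domain R \<and> (\<forall>Q. maximal_ideal Q R \<longrightarrow> (\<Inter>n\<in>{1..}. ideal_pow R Q n) = {0}))) \<and>
     ((AV_domain R \<and> (\<forall>Q. maximal_ideal Q R \<longrightarrow> (\<Inter>n\<in>{1..}. ideal_pow R Q n) = {0})) \<longleftrightarrow>
        (AV_domain R \<and> (\<forall>Q. maximal_ideal Q R \<longrightarrow>
           (\<forall>A. ideal A R \<and> {0} \<subset> A \<and> A \<subset> R \<longrightarrow> (\<exists>n. ideal_pow R Q n \<subseteq> A))))) \<and>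
     ((AV_domain R \<and> (\<forall>Q. maximal_ideal Q R \<longrightarrow>
           (\<forall>A. ideal A R \<and> {0} \<subset> A \<and> A \<subset> R \<longrightarrow> (\<exists>n. ideal_pow R Q n \<subseteq> A)))) \<longleftrightarrow>
        (DVR V \<and> D = F \<and> subfield F \<and> root_ext F K)))"
proof -
  interpret DM: D_plus_M D K V M
    using V VL M M0 K KV VKM D DK by unfold_locales
  have R_eq: "R = DM.R" by (simp add: R DM.R_def)
  show ?thesis
    unfolding Rbar Dt F R_eq
    by (rule DM.DVR_R_iff DM.D_eq_K_conj_iff DM.rational_valuation_domain_R_iff
        DM.root_ext_R_iff DM.bounded_root_ext_R_iff
        DM.AV_domain_R_iff_integral_closure DM.integral_closure_valuation_iff_AV_domain
        trans[OF DM.AV_DVR_integral_closure_iff DM.AV_Inter_powers_iff[symmetric]]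
        trans[OF DM.AV_Inter_powers_iff DM.AV_power_subset_iff[symmetric]]
        trans[OF DM.AV_power_subset_iff DM.AV_DVR_subfield_iff] conjI)+
qed

end
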